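(* For any graph $G$ with connected components $G_1,\dots,G_n$, we have $\lfloor \mathrm{sp}\rfloor(G)=\lfloor \mathrm{sp}\rfloor(G_1)+\cdots+\lfloor \mathrm{sp}\rfloor(G_n)$.
   Context: All graphs are finite, have at least one vertex, have no loops, and may have multiple (parallel) edges. A unique shortest path is a shortest $u$–$v$ path $P$ such that every $u$–$v$ path with the same number of vertices is identical to $P$, where two paths with different edge sequences are different even if their vertex sequences agree; a single vertex is a unique shortest path. The parade number $\mathrm{usp}(G)$ is the largest number of vertices of a unique shortest path in $G$. The spectator number is $\mathrm{sp}(G)=|V(G)|-\mathrm{usp}(G)$. A minor of $H$ is any graph obtained from $H$ by a sequence of: deleting an isolated vertex, deleting an edge, contracting an edge that has no edge parallel to it. The spectator floor $\lfloor \mathrm{sp}\rfloor(G)$ is the minimum of $\mathrm{sp}(H)$ over all graphs $H$ of which $G$ is a minor. *)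

theory Defs
  imports Main
begin

text \<open>Finite multigraphs without loops. Vertices and edges are natural numbers
(every finite graph is isomorphic to such a graph); each edge e has a 2-element
set of ends.\<close>

record mgraph =
  verts :: "nat set"
  edges :: "nat set"
  ends  :: "nat \<Rightarrow> nat set"

definition is_graph :: "mgraph \<Rightarrow> bool" where
  "is_graph G \<longleftrightarrow> finite (verts G) \<and> verts G \<noteq> {} \<and> finite (edges G) \<and>
     (\<forall>e\<in>edges G. ends G e \<subseteq> verts G \<and> card (ends G e) = 2)"

text \<open>A path: vertex sequence and edge sequence (edges distinguish parallel paths).\<close>
definition is_path :: "mgraph \<Rightarrow> nat list \<Rightarrow> nat list \<Rightarrow> bool" where
  "is_path G vs es \<longleftrightarrow> length vs = Suc (length es) \<and> distinct vs \<and>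
     set vs \<subseteq> verts G \<and>
     (\<forall>i<length es. es ! i \<in> edges G \<and> ends G (es ! i) = {vs ! i, vs ! Suc i})"

definition is_uv_path :: "mgraph \<Rightarrow> nat \<Rightarrow> nat \<Rightarrow> nat list \<Rightarrow> nat list \<Rightarrow> bool" where
  "is_uv_path G u v vs es \<longleftrightarrow> is_path G vs es \<and> hd vs = u \<and> last vs = v"

definition is_usp :: "mgraph \<Rightarrow> nat list \<Rightarrow> nat list \<Rightarrow> bool" where
  "is_usp G vs es \<longleftrightarrow> is_path G vs es \<and>
     (\<forall>vs' es'. is_uv_path G (hd vs) (last vs) vs' es' \<longrightarrow> length vs \<le> length vs') \<and>
     (\<forall>vs' es'. is_uv_path G (hd vs) (last vs) vs' es' \<and> length vs' = length vs \<longrightarrow>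
         vs' = vs \<and> es' = es)"

definition usp :: "mgraph \<Rightarrow> nat" where
  "usp G = Max {length vs | vs es. is_usp G vs es}"

definition sp :: "mgraph \<Rightarrow> nat" where
  "sp G = card (verts G) - usp G"

definition graph_iso :: "mgraph \<Rightarrow> mgraph \<Rightarrow> bool" where
  "graph_iso G H \<longleftrightarrow> (\<exists>f g. bij_betw f (verts G) (verts H) \<and> bij_betw g (edges G) (edges H) \<and>
     (\<forall>e\<in>edges G. ends H (g e) = f ` ends G e))"

definition minor_step :: "mgraph \<Rightarrow> mgraph \<Rightarrow> bool" where
  "minor_step H H' \<longleftrightarrow> is_graph H \<and> is_graph H' \<and>
    ((\<exists>v\<in>verts H. (\<forall>e\<in>edges H. v \<notin> ends H e) \<and>
        H' = \<lparr>verts = verts H - {v}, edges = edges H, ends = ends H\<rparr>)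
   \<or> (\<exists>e\<in>edges H. H' = \<lparr>verts = verts H, edges = edges H - {e}, ends = ends H\<rparr>)
   \<or> (\<exists>e\<in>edges H. \<exists>u v. ends H e = {u, v} \<and> u \<noteq> v \<and>
        (\<forall>f\<in>edges H. f \<noteq> e \<longrightarrow> ends H f \<noteq> ends H e) \<and>
        H' = \<lparr>verts = verts H - {v}, edges = edges H - {e},
              ends = (\<lambda>f. (\<lambda>x. if x = v then u else x) ` ends H f)\<rparr>))"

definition is_minor :: "mgraph \<Rightarrow> mgraph \<Rightarrow> bool" where
  "is_minor G H \<longleftrightarrow> is_graph H \<and> (\<exists>G'. minor_step\<^sup>*\<^sup>* H G' \<and> graph_iso G' G)"

definition sp_floor :: "mgraph \<Rightarrow> nat" where
  "sp_floor G = (LEAST k. \<exists>H. is_graph H \<and> is_minor G H \<and> sp H = k)"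

definition adj :: "mgraph \<Rightarrow> nat \<Rightarrow> nat \<Rightarrow> bool" where
  "adj G x y \<longleftrightarrow> (\<exists>e\<in>edges G. ends G e = {x, y})"

definition components :: "mgraph \<Rightarrow> nat set set" where
  "components G = {C. \<exists>v\<in>verts G. C = {w \<in> verts G. (adj G)\<^sup>*\<^sup>* v w}}"

definition induced :: "mgraph \<Rightarrow> nat set \<Rightarrow> mgraph" where
  "induced G C = \<lparr>verts = C, edges = {e \<in> edges G. ends G e \<subseteq> C}, ends = ends G\<rparr>"

end

(*
  Let H realise the spectator floor of G, fix a minor model of G in H and a longest unique
  shortest path P of H. For a component C, the subgraph of H induced by P and the branch sets
  of C still has G[C] as a minor and P as a unique shortest path, so its spectators lie in
  branch sets of C off P; these sets are disjoint for different components, which gives the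
  lower bound. Conversely, given optimal graphs H1 and H2 for two unions of components, join
  the last vertex of a longest unique shortest path of H1 to the first vertex of one of H2 by
  a new edge. Every path between the outer ends crosses this bridge exactly once, so the
  concatenation is again a unique shortest path and the spectators add up; induction over the
  components gives the upper bound.

  Minors are handled through minor models (branch sets): a model survives each minor
  operation backwards, and conversely a model can be reduced to an isomorphism by minor
  operations.
*)
theory Submission
  imports Defs
begin

section \<open>Paths and unique shortest paths\<close>

lemma is_path_Nil [simp]: "\<not> is_path H [] es"
  by (simp add: is_path_def)

lemma is_path_singleton [simp]: "is_path H [x] es \<longleftrightarrow> es = [] \<and> x \<in> verts H"
  by (auto simp: is_path_def)

lemma is_path_Cons_Cons:
  "is_path H (x # y # vs) es \<longleftrightarrow>
    (\<exists>e es'. es = e # es' \<and> e \<in> edges H \<and> ends H e = {x, y} \<and> x \<in> verts H \<and>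
       x \<notin> set (y # vs) \<and> is_path H (y # vs) es')"
proof (cases es)
  case (Cons e es')
  show ?thesis unfolding Cons is_path_def by (simp only: length_Cons All_less_Suc2) auto
qed (simp add: is_path_def)

lemma path_length_eq_card: "is_path H vs es \<Longrightarrow> length vs = card (set vs)"
  by (simp add: is_path_def distinct_card)

lemma path_length_le_card: "is_graph H \<Longrightarrow> is_path H vs es \<Longrightarrow> length vs \<le> card (verts H)"
  by (metis is_graph_def is_path_def card_mono path_length_eq_card)

lemma path_edge_ends:
  assumes "is_path H vs es" "e \<in> set es"
  obtains x y where "e \<in> edges H" "ends H e = {x, y}" "x \<in> set vs" "y \<in> set vs"
proof -
  obtain i where i: "i < length es" "es ! i = e" using assms(2) by (metis in_set_conv_nth)
  then have "Suc i < length vs" using assms(1) by (simp add: is_path_def)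
  then show thesis using that assms(1) i by (auto simp: is_path_def)
qed

lemma is_path_map:
  assumes P: "is_path H vs es" and inj: "inj_on f (set vs)" and f: "f ` set vs \<subseteq> verts H'"
    and g: "\<And>e. e \<in> set es \<Longrightarrow> g e \<in> edges H' \<and> ends H' (g e) = f ` ends H e"
  shows "is_path H' (map f vs) (map g es)"
  unfolding is_path_def
proof (intro conjI allI impI)
  show "length (map f vs) = Suc (length (map g es))" "distinct (map f vs)"
    using P inj by (auto simp: is_path_def distinct_map)
  show "set (map f vs) \<subseteq> verts H'" using f by simp
next
  fix i assume "i < length (map g es)"
  then have i: "i < length es" "Suc i < length vs" using P by (auto simp: is_path_def)
  then have "g (es ! i) \<in> edges H' \<and> ends H' (g (es ! i)) = f ` ends H (es ! i)" using g by simp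
  then show "map g es ! i \<in> edges H'" "ends H' (map g es ! i) = {map f vs ! i, map f vs ! Suc i}"
    using P i by (auto simp: is_path_def)
qed

lemma is_path_append:
  assumes "is_path H A ea" "is_path H B eb" "set A \<inter> set B = {}"
    and "b \<in> edges H" "ends H b = {last A, hd B}"
  shows "is_path H (A @ B) (ea @ b # eb)"
  using assms
proof (induction A arbitrary: ea rule: induct_list012)
  case (2 x)
  then obtain y B' where "B = y # B'" by (cases B) auto
  with 2 show ?case by (simp add: is_path_Cons_Cons)
next
  case (3 x y zs)
  then obtain e ea' where "ea = e # ea'" "e \<in> edges H" "ends H e = {x, y}" "x \<in> verts H"
    "x \<notin> set (y # zs)" "is_path H (y # zs) ea'"
    by (auto simp: is_path_Cons_Cons)
  moreover have "is_path H ((y # zs) @ B) (ea' @ b # eb)"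
    using 3 calculation by auto
  ultimately show ?case using "3.prems"(3) by (simp add: is_path_Cons_Cons)
qed simp

lemma is_path_induced_iff:
  "V \<subseteq> verts G \<Longrightarrow> is_path (induced G V) vs es \<longleftrightarrow> is_path G vs es \<and> set vs \<subseteq> V"
  unfolding is_path_def induced_def by (auto 0 4 dest: nth_mem)

lemma is_usp_induced:
  assumes "is_usp G vs es" "set vs \<subseteq> V" "V \<subseteq> verts G"
  shows "is_usp (induced G V) vs es"
  using assms unfolding is_usp_def is_uv_path_def by (auto simp: is_path_induced_iff)

lemma is_usp_singleton: "v \<in> verts H \<Longrightarrow> is_usp H [v] []"
  unfolding is_usp_def is_uv_path_def by (auto simp: is_path_def length_Suc_conv)

lemma finite_usp_lengths: "is_graph H \<Longrightarrow> finite {length vs | vs es. is_usp H vs es}"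
proof (rule finite_subset)
  assume "is_graph H"
  then show "{length vs | vs es. is_usp H vs es} \<subseteq> {..card (verts H)}"
    using path_length_le_card by (auto simp: is_usp_def)
qed simp

lemma length_le_usp: "is_graph H \<Longrightarrow> is_usp H vs es \<Longrightarrow> length vs \<le> usp H"
  unfolding usp_def by (intro Max_ge[OF finite_usp_lengths]) auto

lemma usp_attained:
  assumes "is_graph H"
  obtains vs es where "is_usp H vs es" "length vs = usp H"
proof -
  obtain v where "v \<in> verts H" using assms by (auto simp: is_graph_def)
  then have "{length vs | vs es. is_usp H vs es} \<noteq> {}" using is_usp_singleton by blast
  then have "usp H \<in> {length vs | vs es. is_usp H vs es}"
    unfolding usp_def using Max_in finite_usp_lengths[OF assms] by blast
  then show thesis using that by auto
qed

lemma card_off_path: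
  "is_graph H \<Longrightarrow> is_path H vs es \<Longrightarrow> card (verts H - set vs) = card (verts H) - length vs"
  using path_length_eq_card[of H vs es] card_Diff_subset[of "set vs" "verts H"]
  by (simp add: is_path_def)

lemma sp_le_card_off_usp:
  assumes "is_graph H" "is_usp H vs es"
  shows "sp H \<le> card (verts H - set vs)"
proof -
  have "is_path H vs es" using assms(2) by (simp add: is_usp_def)
  then show ?thesis using length_le_usp[OF assms] card_off_path[OF assms(1)] by (simp add: sp_def)
qed

lemma sp_eq_card_off_usp:
  "is_graph H \<Longrightarrow> is_usp H vs es \<Longrightarrow> length vs = usp H \<Longrightarrow> sp H = card (verts H - set vs)"
  using card_off_path[of H vs es] by (simp add: sp_def is_usp_def)

lemma is_minor_refl: "is_graph G \<Longrightarrow> is_minor G G"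
  unfolding is_minor_def graph_iso_def
  by (intro conjI exI[of _ G] exI[of _ id]) (auto simp: bij_betw_def)

lemma sp_floor_le: "is_graph H \<Longrightarrow> is_minor K H \<Longrightarrow> sp_floor K \<le> sp H"
  unfolding sp_floor_def by (rule Least_le) blast

lemma sp_floor_attained:
  assumes "is_graph K"
  obtains H where "is_graph H" "is_minor K H" "sp H = sp_floor K"
proof -
  have "\<exists>H. is_graph H \<and> is_minor K H \<and> sp H = sp_floor K"
    unfolding sp_floor_def by (rule LeastI_ex) (use assms is_minor_refl[OF assms] in blast)
  then show thesis using that by blast
qed

lemma symp_adj: "symp (adj H)"
  by (auto simp: symp_def adj_def insert_commute)

definition joined_in :: "mgraph \<Rightarrow> nat set \<Rightarrow> nat \<Rightarrow> nat \<Rightarrow> bool" where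
  "joined_in H B = (\<lambda>a b. a \<in> B \<and> b \<in> B \<and> adj H a b)\<^sup>*\<^sup>*"

lemma joined_in_refl [simp]: "joined_in H B x x"
  by (simp add: joined_in_def)

lemma joined_in_adj: "a \<in> B \<Longrightarrow> b \<in> B \<Longrightarrow> adj H a b \<Longrightarrow> joined_in H B a b"
  by (simp add: joined_in_def r_into_rtranclp)

lemma joined_in_trans: "joined_in H B x y \<Longrightarrow> joined_in H B y z \<Longrightarrow> joined_in H B x z"
  unfolding joined_in_def by (rule rtranclp_trans)

lemma joined_in_sym: "joined_in H B x y \<Longrightarrow> joined_in H B y x"
proof -
  have "symp (\<lambda>a b. a \<in> B \<and> b \<in> B \<and> adj H a b)"
    using symp_adj[of H] by (auto simp: symp_def)
  then show "joined_in H B x y \<Longrightarrow> joined_in H B y x"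
    unfolding joined_in_def by (metis sympD symp_rtranclp)
qed

lemma joined_in_map:
  assumes "joined_in H B x y"
    and "\<And>a b. a \<in> B \<Longrightarrow> b \<in> B \<Longrightarrow> adj H a b \<Longrightarrow> joined_in H' B' (f a) (f b)"
  shows "joined_in H' B' (f x) (f y)"
  using assms(1) unfolding joined_in_def
proof (induction rule: rtranclp_induct)
  case (step y z)
  then show ?case using assms(2)[of y z] unfolding joined_in_def by (meson rtranclp_trans)
qed simp

lemma joined_in_lift:
  assumes "joined_in H B x y"
    and "\<And>a b. a \<in> B \<Longrightarrow> b \<in> B \<Longrightarrow> adj H a b \<Longrightarrow> joined_in H' B' a b"
  shows "joined_in H' B' x y"
  using joined_in_map[of H B x y H' B' "\<lambda>z. z"] assms by simp

lemma joined_in_mono: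
  assumes "joined_in H B x y" "B \<subseteq> B'"
    and "\<And>a b. a \<in> B \<Longrightarrow> b \<in> B \<Longrightarrow> adj H a b \<Longrightarrow> adj H' a b"
  shows "joined_in H' B' x y"
  using assms(1) by (rule joined_in_lift) (use assms(2,3) in \<open>auto intro: joined_in_adj\<close>)

section \<open>Minor operations\<close>

definition del_vertex :: "mgraph \<Rightarrow> nat \<Rightarrow> mgraph" where
  "del_vertex H v = \<lparr>verts = verts H - {v}, edges = edges H, ends = ends H\<rparr>"

definition del_edge :: "mgraph \<Rightarrow> nat \<Rightarrow> mgraph" where
  "del_edge H e = \<lparr>verts = verts H, edges = edges H - {e}, ends = ends H\<rparr>"

definition contract :: "mgraph \<Rightarrow> nat \<Rightarrow> nat \<Rightarrow> nat \<Rightarrow> mgraph" where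
  "contract H e u v = \<lparr>verts = verts H - {v}, edges = edges H - {e},
     ends = (\<lambda>f. (\<lambda>x. if x = v then u else x) ` ends H f)\<rparr>"

lemma del_vertex_simps [simp]:
  "verts (del_vertex H v) = verts H - {v}" "edges (del_vertex H v) = edges H"
  "ends (del_vertex H v) = ends H"
  by (simp_all add: del_vertex_def)

lemma del_edge_simps [simp]:
  "verts (del_edge H e) = verts H" "edges (del_edge H e) = edges H - {e}"
  "ends (del_edge H e) = ends H"
  by (simp_all add: del_edge_def)

lemma adj_del_vertex [simp]: "adj (del_vertex H v) = adj H"
  by (simp add: adj_def fun_eq_iff)

lemma joined_in_del_vertex [simp]: "joined_in (del_vertex H v) = joined_in H"
  by (simp add: joined_in_def fun_eq_iff)

lemma adj_del_edgeD: "adj (del_edge H e) a b \<Longrightarrow> adj H a b"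
  by (auto simp: adj_def)

lemma adj_contractE:
  assumes H: "is_graph H" and ab: "adj (contract H e u v) a b"
  obtains p q where "adj H p q" "p \<in> verts H" "q \<in> verts H"
    "(if p = v then u else p) = a" "(if q = v then u else q) = b"
proof -
  let ?\<sigma> = "\<lambda>x. if x = v then u else x"
  from ab obtain g where g: "g \<in> edges H" "?\<sigma> ` ends H g = {a, b}"
    by (auto simp: adj_def contract_def)
  have "ends H g \<subseteq> verts H" "card (ends H g) = 2" using H g(1) by (auto simp: is_graph_def)
  then obtain p q where pq: "ends H g = {p, q}" "p \<in> verts H" "q \<in> verts H"
    by (metis card_2_iff insert_subset)
  have "adj H p q" "adj H q p" using g(1) pq(1) by (auto simp: adj_def insert_commute)
  moreover have "{?\<sigma> p, ?\<sigma> q} = {a, b}" using g(2) pq(1) by (simp only: image_insert image_empty)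
  then have "?\<sigma> p = a \<and> ?\<sigma> q = b \<or> ?\<sigma> q = a \<and> ?\<sigma> p = b" by (simp only: doubleton_eq_iff) blast
  ultimately show thesis using that pq(2,3) by blast
qed

lemma minor_step_cases:
  assumes "minor_step H H'"
  obtains (del_vertex) v where "H' = del_vertex H v"
    | (del_edge) e where "H' = del_edge H e"
    | (contract) e u v where "e \<in> edges H" "ends H e = {u, v}" "H' = contract H e u v"
  using assms unfolding minor_step_def del_vertex_def del_edge_def contract_def by blast

lemma minor_step_del_edge: "is_graph H \<Longrightarrow> e \<in> edges H \<Longrightarrow> minor_step H (del_edge H e)"
  unfolding minor_step_def is_graph_def del_edge_def by auto

lemma minor_step_del_vertex:
  "is_graph H \<Longrightarrow> v \<in> verts H \<Longrightarrow> \<forall>e\<in>edges H. v \<notin> ends H e \<Longrightarrow> verts H \<noteq> {v} \<Longrightarrow>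
    minor_step H (del_vertex H v)"
  unfolding minor_step_def is_graph_def del_vertex_def by auto

lemma is_graph_contract:
  assumes H: "is_graph H" and e: "e \<in> edges H" "ends H e = {u, v}"
    and simple: "\<forall>f\<in>edges H. f \<noteq> e \<longrightarrow> ends H f \<noteq> ends H e"
  shows "is_graph (contract H e u v)"
  unfolding is_graph_def
proof (intro conjI ballI)
  let ?\<sigma> = "\<lambda>x. if x = v then u else x"
  have uv: "u \<in> verts H" "v \<in> verts H" "u \<noteq> v" using H e by (auto simp: is_graph_def)
  show "finite (verts (contract H e u v))" "finite (edges (contract H e u v))"
    "verts (contract H e u v) \<noteq> {}"
    using H uv by (auto simp: contract_def is_graph_def)
  fix g assume "g \<in> edges (contract H e u v)"
  then have g: "g \<in> edges H" "g \<noteq> e" by (auto simp: contract_def)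
  have "ends H g \<subseteq> verts H" "card (ends H g) = 2" using H g(1) by (auto simp: is_graph_def)
  then obtain a b where ab: "ends H g = {a, b}" "a \<noteq> b" "a \<in> verts H" "b \<in> verts H"
    by (metis card_2_iff insert_subset)
  then show "ends (contract H e u v) g \<subseteq> verts (contract H e u v)"
    using uv by (auto simp: contract_def)
  have "?\<sigma> a \<noteq> ?\<sigma> b"
    using ab(1,2) simple g e(2) uv(3) by (auto simp: doubleton_eq_iff split: if_splits)
  moreover have "ends (contract H e u v) g = {?\<sigma> a, ?\<sigma> b}"
    by (simp only: contract_def mgraph.select_convs ab(1) image_insert image_empty)
  ultimately show "card (ends (contract H e u v) g) = 2" by simp
qed

lemma minor_step_contract:
  assumes "is_graph H" "e \<in> edges H" "ends H e = {u, v}"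
    and "\<forall>f\<in>edges H. f \<noteq> e \<longrightarrow> ends H f \<noteq> ends H e"
  shows "minor_step H (contract H e u v)"
proof -
  have "u \<noteq> v" using assms(1-3) by (auto simp: is_graph_def)
  then have "\<exists>e'\<in>edges H. \<exists>u' v'. ends H e' = {u', v'} \<and> u' \<noteq> v' \<and>
      (\<forall>f\<in>edges H. f \<noteq> e' \<longrightarrow> ends H f \<noteq> ends H e') \<and>
      contract H e u v = \<lparr>verts = verts H - {v'}, edges = edges H - {e'},
        ends = (\<lambda>f. (\<lambda>x. if x = v' then u' else x) ` ends H f)\<rparr>"
    using assms(2-4) unfolding contract_def by blast
  then show ?thesis unfolding minor_step_def using assms(1) is_graph_contract[OF assms] by blast
qed

lemma is_minor_minor_step:
  assumes "minor_step H H'" "is_minor K H'"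
  shows "is_minor K H"
proof -
  have "is_graph H" using assms(1) by (simp add: minor_step_def)
  moreover obtain G' where "minor_step\<^sup>*\<^sup>* H' G'" "graph_iso G' K"
    using assms(2) by (auto simp: is_minor_def)
  ultimately show ?thesis
    unfolding is_minor_def using assms(1) by (blast intro: converse_rtranclp_into_rtranclp)
qed

section \<open>Minor models\<close>

text \<open>\<open>\<phi>\<close> maps the union \<open>D\<close> of the branch sets onto the vertices of \<open>K\<close>; its fibres
  are the branch sets, each connected in \<open>H\<close>. \<open>\<psi>\<close> chooses for every edge of \<open>K\<close> an edge of
  \<open>H\<close> joining the two corresponding branch sets.\<close>

definition minor_model :: "mgraph \<Rightarrow> mgraph \<Rightarrow> (nat \<Rightarrow> nat) \<Rightarrow> nat set \<Rightarrow> (nat \<Rightarrow> nat) \<Rightarrow> bool" where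
  "minor_model K H \<phi> D \<psi> \<longleftrightarrow> D \<subseteq> verts H \<and> \<phi> ` D = verts K \<and>
     (\<forall>x\<in>D. \<forall>y\<in>D. \<phi> x = \<phi> y \<longrightarrow> joined_in H {z \<in> D. \<phi> z = \<phi> x} x y) \<and>
     inj_on \<psi> (edges K) \<and>
     (\<forall>e\<in>edges K. \<psi> e \<in> edges H \<and> ends H (\<psi> e) \<subseteq> D \<and> \<phi> ` ends H (\<psi> e) = ends K e)"

lemma minor_model_of_graph_iso:
  assumes "is_graph H" "graph_iso H K"
  obtains \<phi> D \<psi> where "minor_model K H \<phi> D \<psi>"
proof -
  from assms(2) obtain f g where f: "bij_betw f (verts H) (verts K)"
    and g: "bij_betw g (edges H) (edges K)" and fg: "\<forall>e\<in>edges H. ends K (g e) = f ` ends H e"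
    unfolding graph_iso_def by blast
  let ?\<psi> = "inv_into (edges H) g"
  have \<psi>: "bij_betw ?\<psi> (edges K) (edges H)" using g by (rule bij_betw_inv_into)
  have "minor_model K H f (verts H) ?\<psi>"
    unfolding minor_model_def
  proof (intro conjI ballI impI)
    fix x y assume "x \<in> verts H" "y \<in> verts H" "f x = f y"
    then have "x = y" using f by (auto simp: bij_betw_def inj_on_def)
    then show "joined_in H {z \<in> verts H. f z = f x} x y" by simp
  next
    fix e assume e: "e \<in> edges K"
    have e': "?\<psi> e \<in> edges H" "g (?\<psi> e) = e"
      using bij_betw_apply[OF \<psi> e] bij_betw_inv_into_right[OF g e] by auto
    then show "?\<psi> e \<in> edges H" "ends H (?\<psi> e) \<subseteq> verts H"
      using assms(1) by (auto simp: is_graph_def)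
    show "f ` ends H (?\<psi> e) = ends K e" using fg e' by metis
  qed (use f \<psi> in \<open>auto simp: bij_betw_def\<close>)
  then show thesis by (rule that)
qed

lemma minor_model_lift_del_vertex: "minor_model K (del_vertex H v) \<phi> D \<psi> \<Longrightarrow> minor_model K H \<phi> D \<psi>"
  unfolding minor_model_def by auto

lemma minor_model_lift_del_edge: "minor_model K (del_edge H e) \<phi> D \<psi> \<Longrightarrow> minor_model K H \<phi> D \<psi>"
proof -
  have "joined_in H B x y" if "joined_in (del_edge H e) B x y" for B x y
    using that by (rule joined_in_mono) (auto dest: adj_del_edgeD)
  then show "minor_model K (del_edge H e) \<phi> D \<psi> \<Longrightarrow> minor_model K H \<phi> D \<psi>"
    unfolding minor_model_def by auto
qed

lemma joined_in_contract:
  assumes "joined_in H B x y" "ends H e = {u, v}"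
  shows "joined_in (contract H e u v) ((\<lambda>z. if z = v then u else z) ` B)
    (if x = v then u else x) (if y = v then u else y)"
  using assms(1)
proof (rule joined_in_map[where f = "\<lambda>z. if z = v then u else z"])
  fix a b assume ab: "a \<in> B" "b \<in> B" "adj H a b"
  then obtain g where g: "g \<in> edges H" "ends H g = {a, b}" by (auto simp: adj_def)
  show "joined_in (contract H e u v) ((\<lambda>z. if z = v then u else z) ` B)
    (if a = v then u else a) (if b = v then u else b)"
  proof (cases "g = e")
    case True
    then show ?thesis using g(2) assms(2) by (auto simp: doubleton_eq_iff)
  next
    case False
    then have "g \<in> edges (contract H e u v)"
      "ends (contract H e u v) g = {if a = v then u else a, if b = v then u else b}"
      using g by (simp_all only: contract_def mgraph.select_convs image_insert image_empty) simp
    then have "adj (contract H e u v) (if a = v then u else a) (if b = v then u else b)"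
      unfolding adj_def by blast
    then show ?thesis using ab(1,2) by (intro joined_in_adj) auto
  qed
qed

lemma joined_in_contract_lift:
  assumes H: "is_graph H" and e: "e \<in> edges H" "ends H e = {u, v}"
    and \<sigma>: "\<sigma> = (\<lambda>z. if z = v then u else z)"
    and W: "joined_in (contract H e u v) B x y"
  shows "joined_in H {z \<in> verts H. \<sigma> z \<in> B} x y"
proof -
  let ?B = "{z \<in> verts H. \<sigma> z \<in> B}"
  have uv: "u \<in> verts H" "u \<noteq> v" using H e by (auto simp: is_graph_def)
  have to_\<sigma>: "joined_in H ?B p (\<sigma> p)" if "p \<in> ?B" for p
  proof (cases "p = v")
    case True
    then have "adj H p (\<sigma> p)" "\<sigma> p \<in> ?B" using e that uv \<sigma> by (auto simp: adj_def insert_commute)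
    then show ?thesis using that by (simp add: joined_in_adj)
  qed (simp add: \<sigma>)
  from W show ?thesis
  proof (rule joined_in_lift)
    fix a b assume "a \<in> B" "b \<in> B" "adj (contract H e u v) a b"
    then obtain p q where pq: "adj H p q" "p \<in> verts H" "q \<in> verts H" "\<sigma> p = a" "\<sigma> q = b"
      using adj_contractE[OF H] unfolding \<sigma> by metis
    then have "p \<in> ?B" "q \<in> ?B" using \<open>a \<in> B\<close> \<open>b \<in> B\<close> by auto
    then have "joined_in H ?B a p" "joined_in H ?B p q" "joined_in H ?B q b"
      using to_\<sigma> pq by (auto intro: joined_in_sym joined_in_adj)
    then show "joined_in H ?B a b" by (meson joined_in_trans)
  qed
qed

lemma minor_model_lift_contract:
  assumes H: "is_graph H" and e: "e \<in> edges H" "ends H e = {u, v}"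
    and M: "minor_model K (contract H e u v) \<phi> D \<psi>"
  obtains \<phi>' D' where "minor_model K H \<phi>' D' \<psi>"
proof -
  define \<sigma> where "\<sigma> = (\<lambda>x. if x = v then u else x)"
  define D' where "D' = {z \<in> verts H. \<sigma> z \<in> D}"
  have contract: "verts (contract H e u v) = verts H - {v}" "edges (contract H e u v) = edges H - {e}"
    "\<And>f. ends (contract H e u v) f = \<sigma> ` ends H f"
    by (simp_all add: contract_def \<sigma>_def)
  have uv: "u \<in> verts H" "u \<noteq> v" using H e by (auto simp: is_graph_def)
  have DV: "D \<subseteq> verts H - {v}" using M contract by (simp add: minor_model_def)
  have to_\<sigma>: "joined_in H {z \<in> D'. \<phi> (\<sigma> z) = \<phi> (\<sigma> p)} p (\<sigma> p)" if "p \<in> D'" for p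
  proof (cases "p = v")
    case True
    have "adj H v u" using e by (auto simp: adj_def insert_commute)
    moreover have "u \<in> D'" "\<sigma> v = u" "\<sigma> u = u" using that True uv by (auto simp: D'_def \<sigma>_def)
    ultimately show ?thesis using that True by (auto intro!: joined_in_adj)
  qed (simp add: \<sigma>_def)
  have "minor_model K H (\<phi> \<circ> \<sigma>) D' \<psi>"
    unfolding minor_model_def
  proof (intro conjI ballI impI)
    show "D' \<subseteq> verts H" by (auto simp: D'_def)
    have "\<sigma> ` D' = D" using DV unfolding D'_def \<sigma>_def by force
    then have "(\<phi> \<circ> \<sigma>) ` D' = \<phi> ` D" by (simp only: image_comp[symmetric])
    then show "(\<phi> \<circ> \<sigma>) ` D' = verts K" using M by (simp add: minor_model_def)
    show "inj_on \<psi> (edges K)" using M by (simp add: minor_model_def)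
  next
    fix x y assume x: "x \<in> D'" and y: "y \<in> D'" and xy: "(\<phi> \<circ> \<sigma>) x = (\<phi> \<circ> \<sigma>) y"
    let ?B = "{z \<in> D'. \<phi> (\<sigma> z) = \<phi> (\<sigma> x)}"
    have "joined_in (contract H e u v) {z \<in> D. \<phi> z = \<phi> (\<sigma> x)} (\<sigma> x) (\<sigma> y)"
      using M x y xy by (auto simp: minor_model_def D'_def)
    then have "joined_in H {z \<in> verts H. \<sigma> z \<in> {z \<in> D. \<phi> z = \<phi> (\<sigma> x)}} (\<sigma> x) (\<sigma> y)"
      by (rule joined_in_contract_lift[OF H e \<sigma>_def])
    moreover have "{z \<in> verts H. \<sigma> z \<in> {z \<in> D. \<phi> z = \<phi> (\<sigma> x)}} = ?B" by (auto simp: D'_def)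
    ultimately have "joined_in H ?B (\<sigma> x) (\<sigma> y)" by simp
    moreover have "joined_in H ?B x (\<sigma> x)" "joined_in H ?B y (\<sigma> y)"
      using to_\<sigma>[OF x] to_\<sigma>[OF y] xy by simp_all
    ultimately show "joined_in H {z \<in> D'. (\<phi> \<circ> \<sigma>) z = (\<phi> \<circ> \<sigma>) x} x y"
      by (auto intro: joined_in_trans joined_in_sym)
  next
    fix f assume "f \<in> edges K"
    then have m: "\<psi> f \<in> edges H" "\<sigma> ` ends H (\<psi> f) \<subseteq> D" "\<phi> ` \<sigma> ` ends H (\<psi> f) = ends K f"
      using M contract by (auto simp: minor_model_def)
    then show "\<psi> f \<in> edges H" "(\<phi> \<circ> \<sigma>) ` ends H (\<psi> f) = ends K f"
      by (simp_all add: image_comp)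
    show "ends H (\<psi> f) \<subseteq> D'" using m(1,2) H by (auto simp: D'_def is_graph_def)
  qed
  then show thesis by (rule that)
qed

lemma minor_model_lift:
  assumes "minor_step H H'" "minor_model K H' \<phi> D \<psi>"
  obtains \<phi>' D' \<psi>' where "minor_model K H \<phi>' D' \<psi>'"
  using assms(1)
proof (cases rule: minor_step_cases)
  case (del_vertex v)
  then show thesis using that assms(2) minor_model_lift_del_vertex by blast
next
  case (del_edge e)
  then show thesis using that assms(2) minor_model_lift_del_edge by blast
next
  case (contract e u v)
  have "is_graph H" using assms(1) by (simp add: minor_step_def)
  then show thesis using that assms(2) contract minor_model_lift_contract by metis
qed

lemma is_minor_imp_minor_model:
  assumes "is_minor K H"
  obtains \<phi> D \<psi> where "minor_model K H \<phi> D \<psi>"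
proof -
  from assms obtain G' where "is_graph H" "minor_step\<^sup>*\<^sup>* H G'" "graph_iso G' K"
    by (auto simp: is_minor_def)
  have "is_graph X \<Longrightarrow> \<exists>\<phi> D \<psi>. minor_model K X \<phi> D \<psi>" if "minor_step\<^sup>*\<^sup>* X G'" for X
    using that
  proof (induction rule: converse_rtranclp_induct)
    case base
    then show ?case using minor_model_of_graph_iso \<open>graph_iso G' K\<close> by metis
  next
    case (step X Y)
    then have "is_graph Y" by (simp add: minor_step_def)
    then show ?case using step minor_model_lift by metis
  qed
  then show thesis using that \<open>minor_step\<^sup>*\<^sup>* H G'\<close> \<open>is_graph H\<close> by blast
qed

lemma minor_model_ends_distinct:
  assumes "is_graph K" "minor_model K H \<phi> D \<psi>" "e \<in> edges K" "ends H (\<psi> e) = {p, q}"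
  shows "\<phi> p \<noteq> \<phi> q"
proof
  assume "\<phi> p = \<phi> q"
  have "ends K e = \<phi> ` ends H (\<psi> e)" using assms(2,3) by (simp add: minor_model_def)
  also have "\<dots> = {\<phi> p}" using assms(4) \<open>\<phi> p = \<phi> q\<close> by simp
  finally show False using assms(1,3) by (auto simp: is_graph_def)
qed

lemma minor_model_del_edge:
  assumes M: "minor_model K H \<phi> D \<psi>" and f: "f \<notin> \<psi> ` edges K"
    and adj: "\<And>a b. a \<in> D \<Longrightarrow> b \<in> D \<Longrightarrow> \<phi> a = \<phi> b \<Longrightarrow> adj H a b \<Longrightarrow> adj (del_edge H f) a b"
  shows "minor_model K (del_edge H f) \<phi> D \<psi>"
proof -
  have "joined_in (del_edge H f) {z \<in> D. \<phi> z = \<phi> x} x y"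
    if "x \<in> D" "y \<in> D" "\<phi> x = \<phi> y" for x y
  proof -
    have "joined_in H {z \<in> D. \<phi> z = \<phi> x} x y" using M that by (simp add: minor_model_def)
    then show ?thesis by (rule joined_in_mono) (auto intro: adj)
  qed
  then show ?thesis using M f by (auto simp: minor_model_def)
qed

lemma minor_model_del_vertex:
  "minor_model K H \<phi> D \<psi> \<Longrightarrow> v \<notin> D \<Longrightarrow> minor_model K (del_vertex H v) \<phi> D \<psi>"
  unfolding minor_model_def by auto

lemma minor_model_outside_isolated:
  assumes M: "minor_model K H \<phi> D \<psi>"
    and irredundant: "\<And>f. f \<in> edges H \<Longrightarrow> f \<notin> \<psi> ` edges K \<Longrightarrow> \<not> minor_model K (del_edge H f) \<phi> D \<psi>"
    and x: "x \<notin> D" and f: "f \<in> edges H"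
  shows "x \<notin> ends H f"
proof
  assume xf: "x \<in> ends H f"
  then have "f \<notin> \<psi> ` edges K" using M x by (auto simp: minor_model_def)
  moreover have "minor_model K (del_edge H f) \<phi> D \<psi>"
  proof (rule minor_model_del_edge[OF M \<open>f \<notin> \<psi> ` edges K\<close>])
    fix a b assume "a \<in> D" "b \<in> D" "adj H a b"
    then obtain h where h: "h \<in> edges H" "ends H h = {a, b}" by (auto simp: adj_def)
    moreover have "h \<noteq> f" using h xf x \<open>a \<in> D\<close> \<open>b \<in> D\<close> by auto
    ultimately show "adj (del_edge H f) a b" by (auto simp: adj_def del_edge_def)
  qed
  ultimately show False using irredundant f by blast
qed

lemma minor_model_inner_edge_no_parallel:
  assumes K: "is_graph K" and M: "minor_model K H \<phi> D \<psi>"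
    and irredundant: "\<And>f. f \<in> edges H \<Longrightarrow> f \<notin> \<psi> ` edges K \<Longrightarrow> \<not> minor_model K (del_edge H f) \<phi> D \<psi>"
    and f: "f \<in> edges H" "ends H f = {p, q}" "\<phi> p = \<phi> q" and g: "g \<in> edges H" "g \<noteq> f"
  shows "ends H g \<noteq> ends H f"
proof
  assume gf: "ends H g = ends H f"
  then have "g \<notin> \<psi> ` edges K" using minor_model_ends_distinct[OF K M] f by force
  moreover have "adj (del_edge H g) a b" if "adj H a b" for a b
    using that f(1) g gf by (auto simp: adj_def)
  then have "minor_model K (del_edge H g) \<phi> D \<psi>"
    using minor_model_del_edge[OF M \<open>g \<notin> \<psi> ` edges K\<close>] by blast
  ultimately show False using irredundant g(1) by blast
qed

lemma minor_model_contract: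
  assumes H: "is_graph H" and K: "is_graph K" and M: "minor_model K H \<phi> (verts H) \<psi>"
    and f: "f \<in> edges H" "ends H f = {p, q}" "\<phi> p = \<phi> q"
  shows "minor_model K (contract H f p q) \<phi> (verts H - {q}) \<psi>"
proof -
  define \<sigma> where "\<sigma> = (\<lambda>x. if x = q then p else x)"
  let ?H' = "contract H f p q"
  have contract: "verts ?H' = verts H - {q}" "edges ?H' = edges H - {f}"
    "\<And>g. ends ?H' g = \<sigma> ` ends H g"
    by (simp_all add: contract_def \<sigma>_def)
  have pq: "p \<in> verts H" "q \<in> verts H" "p \<noteq> q" using H f by (auto simp: is_graph_def)
  have \<phi>\<sigma>: "\<phi> (\<sigma> z) = \<phi> z" for z using f(3) by (simp add: \<sigma>_def)
  have \<sigma>V: "\<sigma> z \<in> verts H - {q}" if "z \<in> verts H" for z using that pq by (auto simp: \<sigma>_def)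
  have \<psi>f: "\<psi> e \<noteq> f" if "e \<in> edges K" for e
    using minor_model_ends_distinct[OF K M that] f by auto
  show ?thesis
    unfolding minor_model_def
  proof (intro conjI ballI impI)
    show "verts H - {q} \<subseteq> verts ?H'" using contract by simp
    have "verts H = insert q (verts H - {q})" using pq by blast
    then have "\<phi> ` verts H = insert (\<phi> p) (\<phi> ` (verts H - {q}))" using f(3) by (metis image_insert)
    then have "\<phi> ` (verts H - {q}) = \<phi> ` verts H" using pq by blast
    then show "\<phi> ` (verts H - {q}) = verts K" using M by (simp add: minor_model_def)
    show "inj_on \<psi> (edges K)" using M by (simp add: minor_model_def)
  next
    fix x y assume x: "x \<in> verts H - {q}" and y: "y \<in> verts H - {q}" and xy: "\<phi> x = \<phi> y"
    have "joined_in H {z \<in> verts H. \<phi> z = \<phi> x} x y" using M x y xy by (auto simp: minor_model_def)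
    then have "joined_in ?H' (\<sigma> ` {z \<in> verts H. \<phi> z = \<phi> x}) (\<sigma> x) (\<sigma> y)"
      using joined_in_contract f(2) unfolding \<sigma>_def by blast
    then have "joined_in ?H' {z \<in> verts H - {q}. \<phi> z = \<phi> x} (\<sigma> x) (\<sigma> y)"
      by (rule joined_in_mono) (use \<sigma>V \<phi>\<sigma> in auto)
    moreover have "\<sigma> x = x" "\<sigma> y = y" using x y by (auto simp: \<sigma>_def)
    ultimately show "joined_in ?H' {z \<in> verts H - {q}. \<phi> z = \<phi> x} x y" by simp
  next
    fix e assume e: "e \<in> edges K"
    then have "\<psi> e \<in> edges H" "ends H (\<psi> e) \<subseteq> verts H" "\<phi> ` ends H (\<psi> e) = ends K e"
      using M by (auto simp: minor_model_def)
    then show "\<psi> e \<in> edges ?H'" "ends ?H' (\<psi> e) \<subseteq> verts H - {q}"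
      "\<phi> ` ends ?H' (\<psi> e) = ends K e"
      using \<psi>f[OF e] \<sigma>V contract by (auto simp: image_comp comp_def \<phi>\<sigma>)
  qed
qed

lemma minor_model_graph_iso:
  assumes M: "minor_model K H \<phi> (verts H) \<psi>"
    and irredundant: "\<And>f. f \<in> edges H \<Longrightarrow> f \<notin> \<psi> ` edges K \<Longrightarrow> \<not> minor_model K (del_edge H f) \<phi> (verts H) \<psi>"
    and inner: "\<And>f p q. f \<in> edges H \<Longrightarrow> ends H f = {p, q} \<Longrightarrow> \<phi> p \<noteq> \<phi> q"
  shows "graph_iso H K"
proof -
  have no_inner_adj: "\<phi> a \<noteq> \<phi> b" if "adj H a b" for a b
    using that inner by (auto simp: adj_def)
  have "inj_on \<phi> (verts H)"
  proof (rule inj_onI, rule ccontr)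
    fix x y assume "x \<in> verts H" "y \<in> verts H" "\<phi> x = \<phi> y" "x \<noteq> y"
    then have "joined_in H {z \<in> verts H. \<phi> z = \<phi> x} x y" using M by (auto simp: minor_model_def)
    then obtain z where "adj H x z" "\<phi> z = \<phi> x"
      using \<open>x \<noteq> y\<close> unfolding joined_in_def by (auto elim: converse_rtranclpE)
    then show False using no_inner_adj by metis
  qed
  then have \<phi>: "bij_betw \<phi> (verts H) (verts K)" using M by (simp add: bij_betw_def minor_model_def)
  have "edges H \<subseteq> \<psi> ` edges K"
  proof
    fix f assume f: "f \<in> edges H"
    show "f \<in> \<psi> ` edges K"
    proof (rule ccontr)
      assume "f \<notin> \<psi> ` edges K"
      with f irredundant show False
        using minor_model_del_edge[OF M] no_inner_adj by blast
    qed
  qed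
  then have \<psi>: "bij_betw \<psi> (edges K) (edges H)" using M by (auto simp: bij_betw_def minor_model_def)
  show ?thesis
    unfolding graph_iso_def
  proof (intro exI conjI ballI)
    show "bij_betw (inv_into (edges K) \<psi>) (edges H) (edges K)" using \<psi> by (rule bij_betw_inv_into)
    fix f assume "f \<in> edges H"
    then have "inv_into (edges K) \<psi> f \<in> edges K" "\<psi> (inv_into (edges K) \<psi> f) = f"
      using \<psi> by (auto simp: bij_betw_def inv_into_into f_inv_into_f)
    then show "ends K (inv_into (edges K) \<psi> f) = \<phi> ` ends H f" using M by (metis minor_model_def)
  qed (fact \<phi>)
qed

lemma irredundant_minor_model_reduce:
  assumes H: "is_graph H" and K: "is_graph K" and M: "minor_model K H \<phi> D \<psi>"
    and irredundant: "\<And>f. f \<in> edges H \<Longrightarrow> f \<notin> \<psi> ` edges K \<Longrightarrow> \<not> minor_model K (del_edge H f) \<phi> D \<psi>"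
  shows "graph_iso H K \<or> (\<exists>H' D'. minor_step H H' \<and> minor_model K H' \<phi> D' \<psi> \<and>
    card (verts H') + card (edges H') < card (verts H) + card (edges H))"
proof -
  have fin: "finite (verts H)" "finite (edges H)" using H by (simp_all add: is_graph_def)
  show ?thesis
  proof (cases "D = verts H")
    case False
    then obtain x where x: "x \<in> verts H" "x \<notin> D" using M by (auto simp: minor_model_def)
    have "D \<noteq> {}" using M K by (auto simp: minor_model_def is_graph_def)
    then have "verts H \<noteq> {x}" using M x by (auto simp: minor_model_def)
    then have "minor_step H (del_vertex H x)"
      using minor_step_del_vertex[OF H x(1)] minor_model_outside_isolated[OF M irredundant x(2)]
      by blast
    moreover have "card (verts H - {x}) < card (verts H)" using fin(1) x(1) by (rule card_Diff1_less)
    ultimately show ?thesis using minor_model_del_vertex[OF M x(2)] by fastforce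
  next
    case True
    note M' = M[unfolded True] and irredundant' = irredundant[unfolded True]
    show ?thesis
    proof (cases "\<exists>f\<in>edges H. \<exists>p q. ends H f = {p, q} \<and> \<phi> p = \<phi> q")
      case True
      then obtain f p q where f: "f \<in> edges H" "ends H f = {p, q}" "\<phi> p = \<phi> q" by blast
      have "minor_step H (contract H f p q)"
        using minor_step_contract[OF H f(1,2)] minor_model_inner_edge_no_parallel[OF K M irredundant f]
        by blast
      moreover have "q \<in> verts H" using H f(1,2) by (auto simp: is_graph_def)
      then have "card (verts H - {q}) < card (verts H)" by (rule card_Diff1_less[OF fin(1)])
      moreover have "card (edges H - {f}) < card (edges H)" using fin(2) f(1) by (rule card_Diff1_less)
      ultimately show ?thesis
        using minor_model_contract[OF H K M' f] by (auto simp: contract_def)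
    next
      case False
      then show ?thesis using minor_model_graph_iso[OF M' irredundant'] by blast
    qed
  qed
qed

text \<open>Induction on the size of \<open>H\<close>: delete edges the model does not need, then isolated
  vertices outside the branch sets, then contract edges inside branch sets; when nothing is
  left to do, the model is an isomorphism.\<close>

lemma minor_model_imp_is_minor:
  assumes "is_graph H" "is_graph K" "minor_model K H \<phi> D \<psi>"
  shows "is_minor K H"
  using assms
proof (induction "card (verts H) + card (edges H)" arbitrary: H D rule: less_induct)
  case less
  then have H: "is_graph H" and K: "is_graph K" and M: "minor_model K H \<phi> D \<psi>" by simp_all
  have step: "is_minor K H"
    if "minor_step H H'" "minor_model K H' \<phi> D' \<psi>"
      "card (verts H') + card (edges H') < card (verts H) + card (edges H)" for H' D'
  proof -
    have "is_graph H'" using that(1) by (simp add: minor_step_def)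
    then have "is_minor K H'" using less.hyps[OF that(3)] K that(2) by blast
    with that(1) show ?thesis by (rule is_minor_minor_step)
  qed
  show ?case
  proof (cases "\<exists>f\<in>edges H. f \<notin> \<psi> ` edges K \<and> minor_model K (del_edge H f) \<phi> D \<psi>")
    case True
    then obtain f where f: "f \<in> edges H" "minor_model K (del_edge H f) \<phi> D \<psi>" by blast
    have "card (edges H - {f}) < card (edges H)"
      using H f(1) by (intro card_Diff1_less) (simp_all add: is_graph_def)
    then show ?thesis using step[OF minor_step_del_edge[OF H f(1)] f(2)] by simp
  next
    case False
    then have "graph_iso H K \<or> (\<exists>H' D'. minor_step H H' \<and> minor_model K H' \<phi> D' \<psi> \<and>
      card (verts H') + card (edges H') < card (verts H) + card (edges H))"
      by (intro irredundant_minor_model_reduce[OF H K M]) blast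
    then show ?thesis using H step by (auto simp: is_minor_def)
  qed
qed

section \<open>Components and the lower bound\<close>

lemma is_graph_induced: "is_graph G \<Longrightarrow> V \<subseteq> verts G \<Longrightarrow> V \<noteq> {} \<Longrightarrow> is_graph (induced G V)"
  unfolding is_graph_def induced_def by (auto intro: finite_subset)

lemma induced_verts:
  assumes "is_graph G"
  shows "induced G (verts G) = G"
proof -
  have "{e \<in> edges G. ends G e \<subseteq> verts G} = edges G" using assms by (auto simp: is_graph_def)
  then show ?thesis by (simp add: induced_def)
qed

lemma finite_components: "is_graph G \<Longrightarrow> finite (components G)"
proof -
  have "components G = (\<lambda>v. {w \<in> verts G. (adj G)\<^sup>*\<^sup>* v w}) ` verts G"
    unfolding components_def by auto
  then show "is_graph G \<Longrightarrow> finite (components G)" by (simp add: is_graph_def)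
qed

lemma component_subset: "C \<in> components G \<Longrightarrow> C \<subseteq> verts G"
  unfolding components_def by auto

lemma component_nonempty: "C \<in> components G \<Longrightarrow> C \<noteq> {}"
  unfolding components_def by auto

lemma Union_components: "\<Union>(components G) = verts G"
  unfolding components_def by auto

lemma components_disjoint:
  assumes "C \<in> components G" "C' \<in> components G" "C \<inter> C' \<noteq> {}"
  shows "C = C'"
proof -
  have sym: "(adj G)\<^sup>*\<^sup>* x y \<Longrightarrow> (adj G)\<^sup>*\<^sup>* y x" for x y
    using sympD[OF symp_rtranclp[OF symp_adj]] .
  obtain v v' where C: "C = {w \<in> verts G. (adj G)\<^sup>*\<^sup>* v w}" and C': "C' = {w \<in> verts G. (adj G)\<^sup>*\<^sup>* v' w}"
    using assms(1,2) by (auto simp: components_def)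
  obtain w where "(adj G)\<^sup>*\<^sup>* v w" "(adj G)\<^sup>*\<^sup>* v' w" using assms(3) C C' by auto
  then have "(adj G)\<^sup>*\<^sup>* v v'" "(adj G)\<^sup>*\<^sup>* v' v" by (meson sym rtranclp_trans)+
  then show ?thesis unfolding C C' by (auto intro: rtranclp_trans)
qed

lemma component_adj_closed:
  assumes "is_graph G" "C \<in> components G" "a \<in> C" "adj G a b"
  shows "b \<in> C"
proof -
  obtain v where C: "C = {w \<in> verts G. (adj G)\<^sup>*\<^sup>* v w}" using assms(2) by (auto simp: components_def)
  have "b \<in> verts G" using assms(1,4) by (auto simp: adj_def is_graph_def)
  then show ?thesis using assms(3,4) unfolding C by (auto intro: rtranclp.rtrancl_into_rtrancl)
qed

lemma minor_model_induced:
  assumes M: "minor_model G H \<phi> D \<psi>" and C: "C \<subseteq> verts G"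
    and W: "{z \<in> D. \<phi> z \<in> C} \<subseteq> W" "W \<subseteq> verts H"
  shows "minor_model (induced G C) (induced H W) \<phi> {z \<in> D. \<phi> z \<in> C} \<psi>"
  unfolding minor_model_def
proof (intro conjI ballI impI)
  show "{z \<in> D. \<phi> z \<in> C} \<subseteq> verts (induced H W)" using W by (simp add: induced_def)
  show "\<phi> ` {z \<in> D. \<phi> z \<in> C} = verts (induced G C)"
    using M C by (auto simp: minor_model_def induced_def)
  show "inj_on \<psi> (edges (induced G C))"
    using M by (auto simp: minor_model_def induced_def intro: inj_on_subset)
next
  fix x y assume x: "x \<in> {z \<in> D. \<phi> z \<in> C}" and y: "y \<in> {z \<in> D. \<phi> z \<in> C}" and "\<phi> x = \<phi> y"
  then have "joined_in H {z \<in> D. \<phi> z = \<phi> x} x y" using M by (simp add: minor_model_def)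
  then show "joined_in (induced H W) {z \<in> {z \<in> D. \<phi> z \<in> C}. \<phi> z = \<phi> x} x y"
  proof (rule joined_in_mono)
    fix a b assume "a \<in> {z \<in> D. \<phi> z = \<phi> x}" "b \<in> {z \<in> D. \<phi> z = \<phi> x}" "adj H a b"
    moreover have "a \<in> W" "b \<in> W" using calculation(1,2) x W(1) by auto
    ultimately show "adj (induced H W) a b" by (auto simp: adj_def induced_def)
  qed (use x in auto)
next
  fix e assume "e \<in> edges (induced G C)"
  then have e: "e \<in> edges G" "ends G e \<subseteq> C" by (auto simp: induced_def)
  moreover have "\<psi> e \<in> edges H" "ends H (\<psi> e) \<subseteq> D" "\<phi> ` ends H (\<psi> e) = ends G e"
    using M e(1) by (simp_all add: minor_model_def)
  ultimately have "ends H (\<psi> e) \<subseteq> {z \<in> D. \<phi> z \<in> C}" by blast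
  then show "\<psi> e \<in> edges (induced H W)" "ends (induced H W) (\<psi> e) \<subseteq> {z \<in> D. \<phi> z \<in> C}"
    "\<phi> ` ends (induced H W) (\<psi> e) = ends (induced G C) e"
    using M e W by (auto simp: minor_model_def induced_def)
qed

lemma sp_floor_induced_le:
  assumes G: "is_graph G" and H: "is_graph H" and M: "minor_model G H \<phi> D \<psi>"
    and P: "is_usp H vs es" and C: "C \<subseteq> verts G" "C \<noteq> {}"
  shows "sp_floor (induced G C) \<le> card {z \<in> D - set vs. \<phi> z \<in> C}"
proof -
  define W where "W = set vs \<union> {z \<in> D. \<phi> z \<in> C}"
  have vs: "set vs \<subseteq> verts H" "vs \<noteq> []" using P by (auto simp: is_usp_def is_path_def)
  have W: "set vs \<subseteq> W" "W \<subseteq> verts H" "W \<noteq> {}"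
    using M vs by (auto simp: W_def minor_model_def)
  have GW: "is_graph (induced H W)" using is_graph_induced[OF H W(2,3)] .
  have "minor_model (induced G C) (induced H W) \<phi> {z \<in> D. \<phi> z \<in> C} \<psi>"
    by (rule minor_model_induced[OF M C(1)]) (use W in \<open>auto simp: W_def\<close>)
  then have "is_minor (induced G C) (induced H W)"
    using minor_model_imp_is_minor GW is_graph_induced[OF G C] by blast
  then have "sp_floor (induced G C) \<le> sp (induced H W)" by (rule sp_floor_le[OF GW])
  also have "\<dots> \<le> card (W - set vs)"
    using sp_le_card_off_usp[OF GW is_usp_induced[OF P W(1,2)]] by (simp add: induced_def)
  also have "W - set vs = {z \<in> D - set vs. \<phi> z \<in> C}" by (auto simp: W_def)
  finally show ?thesis .
qed

lemma sum_sp_floor_components_le: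
  assumes G: "is_graph G"
  shows "(\<Sum>C\<in>components G. sp_floor (induced G C)) \<le> sp_floor G"
proof -
  obtain H where H: "is_graph H" "is_minor G H" "sp H = sp_floor G"
    using sp_floor_attained[OF G] .
  obtain \<phi> D \<psi> where M: "minor_model G H \<phi> D \<psi>" using is_minor_imp_minor_model[OF H(2)] .
  obtain vs es where P: "is_usp H vs es" "length vs = usp H" using usp_attained[OF H(1)] .
  let ?S = "\<lambda>C. {z \<in> D - set vs. \<phi> z \<in> C}"
  have fin: "finite (verts H)" using H(1) by (simp add: is_graph_def)
  have DV: "D \<subseteq> verts H" using M by (simp add: minor_model_def)
  have "(\<Sum>C\<in>components G. sp_floor (induced G C)) \<le> (\<Sum>C\<in>components G. card (?S C))"
  proof (rule sum_mono)
    fix C assume "C \<in> components G"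
    then show "sp_floor (induced G C) \<le> card (?S C)"
      by (intro sp_floor_induced_le[OF G H(1) M P(1)] component_subset component_nonempty)
  qed
  also have "\<dots> = card (\<Union>C\<in>components G. ?S C)"
  proof (rule card_UN_disjoint[symmetric])
    show "finite (components G)" by (rule finite_components[OF G])
    show "\<forall>C\<in>components G. finite (?S C)"
      using DV by (blast intro: finite_subset[OF _ fin])
    show "\<forall>C\<in>components G. \<forall>C'\<in>components G. C \<noteq> C' \<longrightarrow> ?S C \<inter> ?S C' = {}"
    proof (intro ballI impI)
      fix C C' assume "C \<in> components G" "C' \<in> components G" "C \<noteq> C'"
      then have "C \<inter> C' = {}" using components_disjoint by blast
      then show "?S C \<inter> ?S C' = {}" by auto
    qed
  qed
  also have "\<dots> \<le> card (verts H - set vs)"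
    using fin DV by (intro card_mono) auto
  also have "\<dots> = sp_floor G" using sp_eq_card_off_usp[OF H(1) P] H(3) by simp
  finally show ?thesis .
qed

section \<open>Joining two graphs by a bridge\<close>

lemma path_stays_outside:
  assumes "is_path H vs es" "hd vs \<notin> X" "a \<notin> set vs"
    and bridge: "\<And>f x y. f \<in> edges H \<Longrightarrow> ends H f = {x, y} \<Longrightarrow> x \<in> X \<Longrightarrow> y \<notin> X \<Longrightarrow> x = a"
  shows "set vs \<inter> X = {}"
  using assms(1-3)
proof (induction vs arbitrary: es rule: induct_list012)
  case (3 x y zs)
  then obtain e es' where e: "e \<in> edges H" "ends H e = {x, y}" "is_path H (y # zs) es'"
    by (auto simp: is_path_Cons_Cons)
  then have "y \<notin> X" using bridge[of e y x] "3.prems"(2,3) by (auto simp: insert_commute)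
  then show ?case using "3.IH"(2)[OF e(3)] "3.prems"(2,3) by auto
qed auto

lemma path_split_at_bridge:
  assumes "is_path H vs es" "hd vs \<in> X" "last vs \<notin> X"
    and bridge: "\<And>f x y. f \<in> edges H \<Longrightarrow> ends H f = {x, y} \<Longrightarrow> x \<in> X \<Longrightarrow> y \<notin> X \<Longrightarrow>
      f = c \<and> x = a \<and> y = b"
  obtains A B ea eb where "vs = A @ B" "es = ea @ c # eb" "is_path H A ea" "is_path H B eb"
    "set A \<subseteq> X" "set B \<inter> X = {}" "last A = a" "hd B = b"
proof -
  have "\<exists>A B ea eb. vs = A @ B \<and> es = ea @ c # eb \<and> is_path H A ea \<and> is_path H B eb \<and>
      set A \<subseteq> X \<and> set B \<inter> X = {} \<and> last A = a \<and> hd B = b"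
    using assms(1-3)
  proof (induction vs arbitrary: es rule: induct_list012)
    case (3 x y zs)
    from "3.prems"(1) obtain e es' where e: "es = e # es'" "e \<in> edges H" "ends H e = {x, y}"
      "x \<in> verts H" "x \<notin> set (y # zs)" "is_path H (y # zs) es'"
      by (auto simp: is_path_Cons_Cons)
    show ?case
    proof (cases "y \<in> X")
      case True
      then obtain A B ea eb where IH: "y # zs = A @ B" "es' = ea @ c # eb" "is_path H A ea"
        "is_path H B eb" "set A \<subseteq> X" "set B \<inter> X = {}" "last A = a" "hd B = b"
        using "3.IH"(2)[OF e(6)] "3.prems"(3) by auto
      then obtain A' where A: "A = y # A'" by (cases A) auto
      have "is_path H (x # A) (e # ea)"
        using IH(1,3) e A by (auto simp: is_path_Cons_Cons)
      moreover have "x # y # zs = (x # A) @ B" "es = (e # ea) @ c # eb" using IH(1,2) e(1) by simp_all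
      moreover have "set (x # A) \<subseteq> X" "last (x # A) = a" using IH(5,7) A "3.prems"(2) by simp_all
      ultimately show ?thesis using IH(4,6,8)
        by (intro exI[of _ "x # A"] exI[of _ B] exI[of _ "e # ea"] exI[of _ eb]) simp
    next
      case False
      then have cab: "e = c" "x = a" "y = b" using bridge e(2,3) "3.prems"(2) by simp_all
      have "set (y # zs) \<inter> X = {}"
      proof (rule path_stays_outside[OF e(6)])
        show "hd (y # zs) \<notin> X" "a \<notin> set (y # zs)" using False cab e(5) by simp_all
      qed (meson bridge)
      moreover have "x # y # zs = [x] @ (y # zs)" "es = [] @ c # es'" "is_path H [x] []"
        "set [x] \<subseteq> X" "last [x] = a" "hd (y # zs) = b" using e(1,4) cab "3.prems"(2) by simp_all
      ultimately show ?thesis using e(6)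
        by (intro exI[of _ "[x]"] exI[of _ "y # zs"] exI[of _ "[]"] exI[of _ es']) simp
    qed
  qed auto
  then show thesis using that by blast
qed

text \<open>The disjoint union of \<open>H1\<close> (on the even vertex numbers, edges \<open>3 * e\<close>) and \<open>H2\<close>
  (on the odd vertex numbers, edges \<open>Suc (3 * e)\<close>), together with the edge \<open>2\<close> joining
  \<open>a\<close> in \<open>H1\<close> to \<open>b\<close> in \<open>H2\<close>.\<close>

definition bridge_union :: "mgraph \<Rightarrow> mgraph \<Rightarrow> nat \<Rightarrow> nat \<Rightarrow> mgraph" where
  "bridge_union H1 H2 a b = \<lparr>verts = (\<lambda>x. 2 * x) ` verts H1 \<union> (\<lambda>x. Suc (2 * x)) ` verts H2,
     edges = (\<lambda>e. 3 * e) ` edges H1 \<union> (\<lambda>e. Suc (3 * e)) ` edges H2 \<union> {2},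
     ends = (\<lambda>e. if e = 2 then {2 * a, Suc (2 * b)}
                 else if e mod 3 = 0 then (\<lambda>x. 2 * x) ` ends H1 (e div 3)
                 else (\<lambda>x. Suc (2 * x)) ` ends H2 (e div 3))\<rparr>"

lemma bridge_union_simps [simp]:
  "verts (bridge_union H1 H2 a b) = (\<lambda>x. 2 * x) ` verts H1 \<union> (\<lambda>x. Suc (2 * x)) ` verts H2"
  "edges (bridge_union H1 H2 a b) = (\<lambda>e. 3 * e) ` edges H1 \<union> (\<lambda>e. Suc (3 * e)) ` edges H2 \<union> {2}"
  "ends (bridge_union H1 H2 a b) 2 = {2 * a, Suc (2 * b)}"
  by (simp_all add: bridge_union_def)

lemma ends_bridge_union_left [simp]:
  "ends (bridge_union H1 H2 a b) (3 * e) = (\<lambda>x. 2 * x) ` ends H1 e"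
proof -
  have "3 * e \<noteq> (2::nat)" by presburger
  then show ?thesis by (simp add: bridge_union_def)
qed

lemma ends_bridge_union_right [simp]:
  "ends (bridge_union H1 H2 a b) (Suc (3 * e)) = (\<lambda>x. Suc (2 * x)) ` ends H2 e"
proof -
  have "Suc (3 * e) \<noteq> 2" "Suc (3 * e) mod 3 \<noteq> 0" "Suc (3 * e) div 3 = e" by presburger+
  then show ?thesis by (simp add: bridge_union_def)
qed

lemma bridge_union_edge_cases:
  assumes "e \<in> edges (bridge_union H1 H2 a b)"
  obtains (left) g where "e = 3 * g" "g \<in> edges H1"
    | (right) g where "e = Suc (3 * g)" "g \<in> edges H2"
    | (bridge) "e = 2"
  using assms by auto

lemma even_neq_odd [simp]: "2 * x \<noteq> Suc (2 * y)" "Suc (2 * y) \<noteq> 2 * x" for x y :: nat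
  by presburger+

lemma is_graph_bridge_union:
  assumes H1: "is_graph H1" and H2: "is_graph H2" and ab: "a \<in> verts H1" "b \<in> verts H2"
  shows "is_graph (bridge_union H1 H2 a b)"
proof -
  let ?J = "bridge_union H1 H2 a b"
  have "ends ?J e \<subseteq> verts ?J \<and> card (ends ?J e) = 2" if "e \<in> edges ?J" for e
    using that
  proof (cases rule: bridge_union_edge_cases)
    case (left g)
    have "ends H1 g \<subseteq> verts H1" "card (ends H1 g) = 2" using H1 left(2) by (auto simp: is_graph_def)
    moreover have "inj_on (\<lambda>x::nat. 2 * x) (ends H1 g)" by (simp add: inj_on_def)
    ultimately show ?thesis using left(1) by (auto simp: card_image)
  next
    case (right g)
    have "ends H2 g \<subseteq> verts H2" "card (ends H2 g) = 2" using H2 right(2) by (auto simp: is_graph_def)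
    moreover have "inj_on (\<lambda>x::nat. Suc (2 * x)) (ends H2 g)" by (simp add: inj_on_def)
    ultimately show ?thesis using right(1) by (auto simp: card_image)
  qed (use ab in auto)
  moreover have "finite (verts ?J)" "finite (edges ?J)" "verts ?J \<noteq> {}"
    using H1 H2 ab by (auto simp: is_graph_def)
  ultimately show ?thesis unfolding is_graph_def by blast
qed

lemma card_verts_bridge_union:
  assumes "is_graph H1" "is_graph H2"
  shows "card (verts (bridge_union H1 H2 a b)) = card (verts H1) + card (verts H2)"
proof -
  have "(\<lambda>x. 2 * x) ` verts H1 \<inter> (\<lambda>x. Suc (2 * x)) ` verts H2 = {}" by auto
  moreover have "inj_on (\<lambda>x::nat. 2 * x) (verts H1)" "inj_on (\<lambda>x::nat. Suc (2 * x)) (verts H2)"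
    by (simp_all add: inj_on_def)
  ultimately show ?thesis
    using assms by (simp add: is_graph_def card_Un_disjoint card_image)
qed

lemma bridge_union_crossing_edge:
  assumes "e \<in> edges (bridge_union H1 H2 a b)" "ends (bridge_union H1 H2 a b) e = {x, y}"
    and "even x" "odd y"
  shows "e = 2 \<and> x = 2 * a \<and> y = Suc (2 * b)"
  using assms(1)
proof (cases rule: bridge_union_edge_cases)
  case (left g)
  then have "y \<in> (\<lambda>x. 2 * x) ` ends H1 g" using assms(2) by simp
  then show ?thesis using assms(4) by auto
next
  case (right g)
  then have "x \<in> (\<lambda>x. Suc (2 * x)) ` ends H2 g" using assms(2) by simp
  then show ?thesis using assms(3) by auto
next
  case bridge
  then have "{2 * a, Suc (2 * b)} = {x, y}" using assms(2) by simp
  then show ?thesis using bridge assms(3,4) by (auto simp: doubleton_eq_iff)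
qed

lemma bridge_union_edge_even:
  assumes "e \<in> edges (bridge_union H1 H2 a b)" "ends (bridge_union H1 H2 a b) e = {x, y}"
    and "even x" "even y"
  shows "3 * (e div 3) = e \<and> e div 3 \<in> edges H1 \<and>
    ends H1 (e div 3) = (\<lambda>x. x div 2) ` ends (bridge_union H1 H2 a b) e"
  using assms(1)
proof (cases rule: bridge_union_edge_cases)
  case (left g)
  then show ?thesis by (simp add: image_comp comp_def)
next
  case (right g)
  then have "x \<in> (\<lambda>x. Suc (2 * x)) ` ends H2 g" using assms(2) by simp
  then show ?thesis using assms(3) by auto
next
  case bridge
  then have "{2 * a, Suc (2 * b)} = {x, y}" using assms(2) by simp
  then show ?thesis using assms(3,4) by (auto simp: doubleton_eq_iff)
qed

lemma bridge_union_edge_odd: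
  assumes "e \<in> edges (bridge_union H1 H2 a b)" "ends (bridge_union H1 H2 a b) e = {x, y}"
    and "odd x" "odd y"
  shows "Suc (3 * (e div 3)) = e \<and> e div 3 \<in> edges H2 \<and>
    ends H2 (e div 3) = (\<lambda>x. x div 2) ` ends (bridge_union H1 H2 a b) e"
  using assms(1)
proof (cases rule: bridge_union_edge_cases)
  case (left g)
  then have "x \<in> (\<lambda>x. 2 * x) ` ends H1 g" using assms(2) by simp
  then show ?thesis using assms(3) by auto
next
  case (right g)
  moreover have "Suc (3 * g) div 3 = g" by presburger
  ultimately show ?thesis by (simp add: image_comp comp_def)
next
  case bridge
  then have "{2 * a, Suc (2 * b)} = {x, y}" using assms(2) by simp
  then show ?thesis using assms(3,4) by (auto simp: doubleton_eq_iff)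
qed

lemma bridge_union_path_even:
  assumes P: "is_path (bridge_union H1 H2 a b) vs es" and ev: "\<forall>x\<in>set vs. even x"
  obtains vs1 es1 where "is_path H1 vs1 es1" "map (\<lambda>x. 2 * x) vs1 = vs" "map (\<lambda>e. 3 * e) es1 = es"
proof
  let ?J = "bridge_union H1 H2 a b"
  have E: "3 * (e div 3) = e \<and> e div 3 \<in> edges H1 \<and> ends H1 (e div 3) = (\<lambda>x. x div 2) ` ends ?J e"
    if e: "e \<in> set es" for e
  proof -
    obtain x y where "e \<in> edges ?J" "ends ?J e = {x, y}" "x \<in> set vs" "y \<in> set vs"
      using path_edge_ends[OF P e] .
    then show ?thesis using ev by (intro bridge_union_edge_even) auto
  qed
  show "is_path H1 (map (\<lambda>x. x div 2) vs) (map (\<lambda>e. e div 3) es)"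
  proof (rule is_path_map[OF P])
    show "inj_on (\<lambda>x. x div 2) (set vs)"
      using ev by (intro inj_onI) (metis dvd_mult_div_cancel)
    show "(\<lambda>x. x div 2) ` set vs \<subseteq> verts H1"
    proof
      fix z assume "z \<in> (\<lambda>x. x div 2) ` set vs"
      then obtain x where x: "x \<in> set vs" "z = x div 2" by blast
      then have "x \<in> (\<lambda>x. 2 * x) ` verts H1 \<union> (\<lambda>x. Suc (2 * x)) ` verts H2"
        using P by (auto simp: is_path_def)
      then show "z \<in> verts H1"
      proof
        assume "x \<in> (\<lambda>x. Suc (2 * x)) ` verts H2"
        moreover have "even x" using ev x(1) by blast
        ultimately show ?thesis by auto
      qed (use x(2) in auto)
    qed
  qed (use E in blast)
  show "map (\<lambda>x. 2 * x) (map (\<lambda>x. x div 2) vs) = vs"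
    unfolding map_map by (rule map_idI) (use ev in simp)
  show "map (\<lambda>e. 3 * e) (map (\<lambda>e. e div 3) es) = es" using E by (auto intro: map_idI)
qed

lemma bridge_union_path_odd:
  assumes P: "is_path (bridge_union H1 H2 a b) vs es" and od: "\<forall>x\<in>set vs. odd x"
  obtains vs2 es2 where "is_path H2 vs2 es2" "map (\<lambda>x. Suc (2 * x)) vs2 = vs"
    "map (\<lambda>e. Suc (3 * e)) es2 = es"
proof
  let ?J = "bridge_union H1 H2 a b"
  have E: "Suc (3 * (e div 3)) = e \<and> e div 3 \<in> edges H2 \<and>
      ends H2 (e div 3) = (\<lambda>x. x div 2) ` ends ?J e"
    if e: "e \<in> set es" for e
  proof -
    obtain x y where "e \<in> edges ?J" "ends ?J e = {x, y}" "x \<in> set vs" "y \<in> set vs"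
      using path_edge_ends[OF P e] .
    then show ?thesis using od by (intro bridge_union_edge_odd) auto
  qed
  show "is_path H2 (map (\<lambda>x. x div 2) vs) (map (\<lambda>e. e div 3) es)"
  proof (rule is_path_map[OF P])
    show "inj_on (\<lambda>x. x div 2) (set vs)"
      using od by (intro inj_onI) (metis odd_two_times_div_two_succ)
    show "(\<lambda>x. x div 2) ` set vs \<subseteq> verts H2"
    proof
      fix z assume "z \<in> (\<lambda>x. x div 2) ` set vs"
      then obtain x where x: "x \<in> set vs" "z = x div 2" by blast
      then have "x \<in> (\<lambda>x. 2 * x) ` verts H1 \<union> (\<lambda>x. Suc (2 * x)) ` verts H2"
        using P by (auto simp: is_path_def)
      then show "z \<in> verts H2"
      proof
        assume "x \<in> (\<lambda>x. 2 * x) ` verts H1"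
        moreover have "odd x" using od x(1) by blast
        ultimately show ?thesis by auto
      qed (use x(2) in auto)
    qed
  qed (use E in blast)
  show "map (\<lambda>x. Suc (2 * x)) (map (\<lambda>x. x div 2) vs) = vs"
    unfolding map_map by (rule map_idI) (use od odd_two_times_div_two_succ in fastforce)
  show "map (\<lambda>e. Suc (3 * e)) (map (\<lambda>e. e div 3) es) = es" using E by (auto intro: map_idI)
qed

lemma bridge_union_path_append:
  assumes P1: "is_path H1 A ea" and P2: "is_path H2 B eb"
  shows "is_path (bridge_union H1 H2 (last A) (hd B))
    (map (\<lambda>x. 2 * x) A @ map (\<lambda>x. Suc (2 * x)) B) (map (\<lambda>e. 3 * e) ea @ 2 # map (\<lambda>e. Suc (3 * e)) eb)"
proof (rule is_path_append)
  let ?J = "bridge_union H1 H2 (last A) (hd B)"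
  show "is_path ?J (map (\<lambda>x. 2 * x) A) (map (\<lambda>e. 3 * e) ea)"
  proof (rule is_path_map[OF P1])
    show "(\<lambda>x. 2 * x) ` set A \<subseteq> verts ?J" using P1 by (auto simp: is_path_def)
    show "3 * e \<in> edges ?J \<and> ends ?J (3 * e) = (\<lambda>x. 2 * x) ` ends H1 e" if "e \<in> set ea" for e
      using path_edge_ends[OF P1 that] by auto
  qed (simp add: inj_on_def)
  show "is_path ?J (map (\<lambda>x. Suc (2 * x)) B) (map (\<lambda>e. Suc (3 * e)) eb)"
  proof (rule is_path_map[OF P2])
    show "(\<lambda>x. Suc (2 * x)) ` set B \<subseteq> verts ?J" using P2 by (auto simp: is_path_def)
    show "Suc (3 * e) \<in> edges ?J \<and> ends ?J (Suc (3 * e)) = (\<lambda>x. Suc (2 * x)) ` ends H2 e"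
      if "e \<in> set eb" for e
      using path_edge_ends[OF P2 that] by auto
  qed (simp add: inj_on_def)
  have "A \<noteq> []" "B \<noteq> []" using P1 P2 by (auto simp: is_path_def)
  then show "ends ?J 2 = {last (map (\<lambda>x. 2 * x) A), hd (map (\<lambda>x. Suc (2 * x)) B)}"
    by (simp add: last_map hd_map)
qed auto

lemma bridge_union_path_split:
  assumes P: "is_path (bridge_union H1 H2 a b) vs es" and "even (hd vs)" "odd (last vs)"
  obtains A ea B eb where "is_path H1 A ea" "is_path H2 B eb" "last A = a" "hd B = b"
    "vs = map (\<lambda>x. 2 * x) A @ map (\<lambda>x. Suc (2 * x)) B"
    "es = map (\<lambda>e. 3 * e) ea @ 2 # map (\<lambda>e. Suc (3 * e)) eb"
proof -
  let ?J = "bridge_union H1 H2 a b"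
  have bridge: "f = 2 \<and> x = 2 * a \<and> y = Suc (2 * b)"
    if "f \<in> edges ?J" "ends ?J f = {x, y}" "x \<in> {x. even x}" "y \<notin> {x. even x}" for f x y
    using bridge_union_crossing_edge that by simp
  have "hd vs \<in> {x. even x}" "last vs \<notin> {x. even x}" using assms(2,3) by simp_all
  then obtain A' B' ea' eb' where S: "vs = A' @ B'" "es = ea' @ 2 # eb'" "is_path ?J A' ea'"
    "is_path ?J B' eb'" "set A' \<subseteq> {x. even x}" "set B' \<inter> {x. even x} = {}"
    "last A' = 2 * a" "hd B' = Suc (2 * b)"
    by (rule path_split_at_bridge[OF P _ _ bridge])
  obtain A ea where A: "is_path H1 A ea" "map (\<lambda>x. 2 * x) A = A'" "map (\<lambda>e. 3 * e) ea = ea'"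
    using bridge_union_path_even[OF S(3)] S(5) by blast
  obtain B eb where B: "is_path H2 B eb" "map (\<lambda>x. Suc (2 * x)) B = B'" "map (\<lambda>e. Suc (3 * e)) eb = eb'"
    using bridge_union_path_odd[OF S(4)] S(6) by blast
  have "A \<noteq> []" "B \<noteq> []" using A(1) B(1) by (auto simp: is_path_def)
  then have "last A = a" "hd B = b" using A(2) B(2) S(7,8) by (auto simp: last_map hd_map)
  then show thesis using that A B S(1,2) by blast
qed

lemma bridge_union_usp:
  assumes U1: "is_usp H1 vs1 es1" and U2: "is_usp H2 vs2 es2"
  shows "is_usp (bridge_union H1 H2 (last vs1) (hd vs2))
    (map (\<lambda>x. 2 * x) vs1 @ map (\<lambda>x. Suc (2 * x)) vs2)
    (map (\<lambda>e. 3 * e) es1 @ 2 # map (\<lambda>e. Suc (3 * e)) es2)"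
proof -
  let ?J = "bridge_union H1 H2 (last vs1) (hd vs2)"
  let ?vs = "map (\<lambda>x. 2 * x) vs1 @ map (\<lambda>x. Suc (2 * x)) vs2"
  let ?es = "map (\<lambda>e. 3 * e) es1 @ 2 # map (\<lambda>e. Suc (3 * e)) es2"
  have P1: "is_path H1 vs1 es1" and P2: "is_path H2 vs2 es2" using U1 U2 by (simp_all add: is_usp_def)
  then have "vs1 \<noteq> []" "vs2 \<noteq> []" by (auto simp: is_path_def)
  then have ends: "hd ?vs = 2 * hd vs1" "last ?vs = Suc (2 * last vs2)" by (simp_all add: hd_map last_map)
  have shortest: "length ?vs \<le> length vs \<and> (length vs = length ?vs \<longrightarrow> vs = ?vs \<and> es = ?es)"
    if P: "is_uv_path ?J (hd ?vs) (last ?vs) vs es" for vs es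
  proof -
    have "is_path ?J vs es" "even (hd vs)" "odd (last vs)" using P ends by (simp_all add: is_uv_path_def)
    then obtain A ea B eb where AB: "is_path H1 A ea" "is_path H2 B eb" "last A = last vs1" "hd B = hd vs2"
      "vs = map (\<lambda>x. 2 * x) A @ map (\<lambda>x. Suc (2 * x)) B"
      "es = map (\<lambda>e. 3 * e) ea @ 2 # map (\<lambda>e. Suc (3 * e)) eb"
      by (rule bridge_union_path_split)
    have "A \<noteq> []" using AB(1) by (auto simp: is_path_def)
    then have "hd A = hd vs1" using P ends AB(5) by (simp add: is_uv_path_def hd_map)
    moreover have "last B = last vs2"
      using P ends AB(2,5) by (cases B rule: rev_cases) (auto simp: is_uv_path_def)
    ultimately have uv: "is_uv_path H1 (hd vs1) (last vs1) A ea" "is_uv_path H2 (hd vs2) (last vs2) B eb"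
      using AB(1-4) by (simp_all add: is_uv_path_def)
    then have "length vs1 \<le> length A" "length vs2 \<le> length B"
      using U1 U2 unfolding is_usp_def by blast+
    moreover have "A = vs1 \<and> ea = es1" if "length A = length vs1"
      using U1 uv(1) that unfolding is_usp_def by blast
    moreover have "B = vs2 \<and> eb = es2" if "length B = length vs2"
      using U2 uv(2) that unfolding is_usp_def by blast
    ultimately show ?thesis using AB(5,6) by auto
  qed
  have "is_path ?J ?vs ?es" using bridge_union_path_append[OF P1 P2] .
  then show ?thesis using shortest unfolding is_usp_def by blast
qed

lemma adj_bridge_union_left:
  assumes "adj H1 p q"
  shows "adj (bridge_union H1 H2 a b) (2 * p) (2 * q)"
proof -
  obtain g where "g \<in> edges H1" "ends H1 g = {p, q}" using assms by (auto simp: adj_def)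
  then show ?thesis unfolding adj_def by (intro bexI[of _ "3 * g"]) auto
qed

lemma adj_bridge_union_right:
  assumes "adj H2 p q"
  shows "adj (bridge_union H1 H2 a b) (Suc (2 * p)) (Suc (2 * q))"
proof -
  obtain g where "g \<in> edges H2" "ends H2 g = {p, q}" using assms by (auto simp: adj_def)
  then show ?thesis unfolding adj_def by (intro bexI[of _ "Suc (3 * g)"]) auto
qed

lemma joined_in_bridge_union_left:
  assumes "joined_in H1 B x y"
  shows "joined_in (bridge_union H1 H2 a b) ((\<lambda>z. 2 * z) ` B) (2 * x) (2 * y)"
  by (rule joined_in_map[OF assms, where f = "\<lambda>z. 2 * z"])
    (auto intro: joined_in_adj adj_bridge_union_left)

lemma joined_in_bridge_union_right:
  assumes "joined_in H2 B x y"
  shows "joined_in (bridge_union H1 H2 a b) ((\<lambda>z. Suc (2 * z)) ` B) (Suc (2 * x)) (Suc (2 * y))"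
  by (rule joined_in_map[OF assms, where f = "\<lambda>z. Suc (2 * z)"])
    (auto intro: joined_in_adj adj_bridge_union_right)

definition interleave :: "(nat \<Rightarrow> 'a) \<Rightarrow> (nat \<Rightarrow> 'a) \<Rightarrow> nat \<Rightarrow> 'a" where
  "interleave f g z = (if even z then f (z div 2) else g (z div 2))"

lemma interleave_simps [simp]: "interleave f g (2 * x) = f x" "interleave f g (Suc (2 * x)) = g x"
  by (simp_all add: interleave_def)

lemma bridge_union_branch_sets_joined:
  fixes D1 D2 D :: "nat set"
  defines "D \<equiv> (\<lambda>x. 2 * x) ` D1 \<union> (\<lambda>x. Suc (2 * x)) ` D2"
  assumes M1: "minor_model K1 H1 \<phi>1 D1 \<psi>1" and M2: "minor_model K2 H2 \<phi>2 D2 \<psi>2"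
    and disj: "verts K1 \<inter> verts K2 = {}"
    and xy: "x \<in> D" "y \<in> D" "interleave \<phi>1 \<phi>2 x = interleave \<phi>1 \<phi>2 y"
  shows "joined_in (bridge_union H1 H2 a b) {z \<in> D. interleave \<phi>1 \<phi>2 z = interleave \<phi>1 \<phi>2 x} x y"
proof -
  let ?J = "bridge_union H1 H2 a b" and ?B = "{z \<in> D. interleave \<phi>1 \<phi>2 z = interleave \<phi>1 \<phi>2 x}"
  have "\<phi>1 ` D1 = verts K1" "\<phi>2 ` D2 = verts K2" using M1 M2 by (simp_all add: minor_model_def)
  then have apart: "\<phi>1 z1 \<noteq> \<phi>2 z2" if "z1 \<in> D1" "z2 \<in> D2" for z1 z2
    using disj that by blast
  consider (left) x' y' where "x = 2 * x'" "y = 2 * y'" "x' \<in> D1" "y' \<in> D1"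
    | (right) x' y' where "x = Suc (2 * x')" "y = Suc (2 * y')" "x' \<in> D2" "y' \<in> D2"
    using xy apart unfolding D_def by (auto simp: image_iff) metis+
  then show ?thesis
  proof cases
    case (left x' y')
    then have "joined_in H1 {z \<in> D1. \<phi>1 z = \<phi>1 x'} x' y'" using M1 xy(3) by (simp add: minor_model_def)
    then have "joined_in ?J ((\<lambda>z. 2 * z) ` {z \<in> D1. \<phi>1 z = \<phi>1 x'}) (2 * x') (2 * y')"
      by (rule joined_in_bridge_union_left)
    then have "joined_in ?J ?B (2 * x') (2 * y')" by (rule joined_in_mono) (use left in \<open>auto simp: D_def\<close>)
    then show ?thesis using left by simp
  next
    case (right x' y')
    then have "joined_in H2 {z \<in> D2. \<phi>2 z = \<phi>2 x'} x' y'" using M2 xy(3) by (simp add: minor_model_def)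
    then have "joined_in ?J ((\<lambda>z. Suc (2 * z)) ` {z \<in> D2. \<phi>2 z = \<phi>2 x'}) (Suc (2 * x')) (Suc (2 * y'))"
      by (rule joined_in_bridge_union_right)
    then have "joined_in ?J ?B (Suc (2 * x')) (Suc (2 * y'))"
      by (rule joined_in_mono) (use right in \<open>auto simp: D_def\<close>)
    then show ?thesis using right by simp
  qed
qed

lemma inj_on_bridge_union_edge_map:
  assumes "inj_on \<psi>1 (edges (induced G W1))" "inj_on \<psi>2 (edges (induced G W2))"
    and sep: "\<And>e. e \<in> edges G \<Longrightarrow> ends G e \<subseteq> W1 \<union> W2 \<Longrightarrow> ends G e \<subseteq> W1 \<or> ends G e \<subseteq> W2"
  shows "inj_on (\<lambda>e. if ends G e \<subseteq> W1 then 3 * \<psi>1 e else Suc (3 * \<psi>2 e)) (edges (induced G (W1 \<union> W2)))"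
proof (rule inj_onI)
  fix e e' assume "e \<in> edges (induced G (W1 \<union> W2))" "e' \<in> edges (induced G (W1 \<union> W2))"
    and ee': "(if ends G e \<subseteq> W1 then 3 * \<psi>1 e else Suc (3 * \<psi>2 e)) =
      (if ends G e' \<subseteq> W1 then 3 * \<psi>1 e' else Suc (3 * \<psi>2 e'))"
  then have e: "e \<in> edges G" "ends G e \<subseteq> W1 \<union> W2" and e': "e' \<in> edges G" "ends G e' \<subseteq> W1 \<union> W2"
    by (auto simp: induced_def)
  have three: "3 * m \<noteq> Suc (3 * n)" for m n :: nat by presburger
  show "e = e'"
  proof (cases "ends G e \<subseteq> W1"; cases "ends G e' \<subseteq> W1")
    assume "ends G e \<subseteq> W1" "ends G e' \<subseteq> W1"
    then show ?thesis using ee' e e' assms(1) by (auto simp: induced_def dest: inj_onD)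
  next
    assume "\<not> ends G e \<subseteq> W1" "\<not> ends G e' \<subseteq> W1"
    moreover have "ends G e \<subseteq> W2" "ends G e' \<subseteq> W2"
      using calculation sep[OF e] sep[OF e'] by blast+
    ultimately show ?thesis using ee' e e' assms(2) by (auto simp: induced_def dest: inj_onD)
  qed (use ee' three in \<open>auto simp: eq_commute[of "3 * _"]\<close>)
qed

lemma minor_model_bridge_union:
  assumes M1: "minor_model (induced G W1) H1 \<phi>1 D1 \<psi>1"
    and M2: "minor_model (induced G W2) H2 \<phi>2 D2 \<psi>2"
    and disj: "W1 \<inter> W2 = {}"
    and sep: "\<And>e. e \<in> edges G \<Longrightarrow> ends G e \<subseteq> W1 \<union> W2 \<Longrightarrow> ends G e \<subseteq> W1 \<or> ends G e \<subseteq> W2"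
  shows "minor_model (induced G (W1 \<union> W2)) (bridge_union H1 H2 a b) (interleave \<phi>1 \<phi>2)
    ((\<lambda>x. 2 * x) ` D1 \<union> (\<lambda>x. Suc (2 * x)) ` D2)
    (\<lambda>e. if ends G e \<subseteq> W1 then 3 * \<psi>1 e else Suc (3 * \<psi>2 e))"
    (is "minor_model ?K ?J ?\<phi> ?D ?\<psi>")
  unfolding minor_model_def
proof (intro conjI ballI impI)
  have m1: "D1 \<subseteq> verts H1" "\<phi>1 ` D1 = W1" and m2: "D2 \<subseteq> verts H2" "\<phi>2 ` D2 = W2"
    using M1 M2 by (simp_all add: minor_model_def induced_def)
  then show "?D \<subseteq> verts ?J" by auto
  have "?\<phi> ` ?D = W1 \<union> W2" unfolding image_Un image_image using m1(2) m2(2) by simp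
  then show "?\<phi> ` ?D = verts ?K" by (simp add: induced_def)
  show "inj_on ?\<psi> (edges ?K)"
    using M1 M2 sep by (intro inj_on_bridge_union_edge_map) (simp_all add: minor_model_def)
next
  fix x y assume "x \<in> ?D" "y \<in> ?D" "?\<phi> x = ?\<phi> y"
  then show "joined_in ?J {z \<in> ?D. ?\<phi> z = ?\<phi> x} x y"
    using bridge_union_branch_sets_joined[OF M1 M2] disj by (simp add: induced_def)
next
  fix e assume "e \<in> edges ?K"
  then have e: "e \<in> edges G" "ends G e \<subseteq> W1 \<union> W2" by (auto simp: induced_def)
  have "?\<psi> e \<in> edges ?J \<and> ends ?J (?\<psi> e) \<subseteq> ?D \<and> ?\<phi> ` ends ?J (?\<psi> e) = ends G e"
  proof (cases "ends G e \<subseteq> W1")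
    case True
    then have "\<psi>1 e \<in> edges H1" "ends H1 (\<psi>1 e) \<subseteq> D1" "\<phi>1 ` ends H1 (\<psi>1 e) = ends G e"
      using M1 e(1) by (simp_all add: minor_model_def induced_def)
    moreover have "?\<phi> ` (\<lambda>x. 2 * x) ` ends H1 (\<psi>1 e) = \<phi>1 ` ends H1 (\<psi>1 e)"
      unfolding image_image by simp
    ultimately show ?thesis using True by auto
  next
    case False
    then have "ends G e \<subseteq> W2" using sep[OF e] by blast
    then have "\<psi>2 e \<in> edges H2" "ends H2 (\<psi>2 e) \<subseteq> D2" "\<phi>2 ` ends H2 (\<psi>2 e) = ends G e"
      using M2 e(1) by (simp_all add: minor_model_def induced_def)
    moreover have "?\<phi> ` (\<lambda>x. Suc (2 * x)) ` ends H2 (\<psi>2 e) = \<phi>2 ` ends H2 (\<psi>2 e)"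
      unfolding image_image by simp
    ultimately show ?thesis using False by auto
  qed
  then show "?\<psi> e \<in> edges ?J" "ends ?J (?\<psi> e) \<subseteq> ?D" "?\<phi> ` ends ?J (?\<psi> e) = ends ?K e"
    by (simp_all add: induced_def)
qed

lemma is_graph_bridge_union_usp:
  assumes "is_graph H1" "is_graph H2" "is_usp H1 vs1 es1" "is_usp H2 vs2 es2"
  shows "is_graph (bridge_union H1 H2 (last vs1) (hd vs2))"
proof -
  have "is_path H1 vs1 es1" "is_path H2 vs2 es2" using assms(3,4) by (simp_all add: is_usp_def)
  moreover from this have "vs1 \<noteq> []" "vs2 \<noteq> []" by (auto simp: is_path_def)
  ultimately have "last vs1 \<in> verts H1" "hd vs2 \<in> verts H2" by (auto simp: is_path_def)
  with assms(1,2) show ?thesis by (rule is_graph_bridge_union)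
qed

lemma sp_bridge_union_le:
  assumes H1: "is_graph H1" and H2: "is_graph H2"
    and U1: "is_usp H1 vs1 es1" "length vs1 = usp H1" and U2: "is_usp H2 vs2 es2" "length vs2 = usp H2"
  shows "sp (bridge_union H1 H2 (last vs1) (hd vs2)) \<le> sp H1 + sp H2"
proof -
  let ?J = "bridge_union H1 H2 (last vs1) (hd vs2)"
  have "length vs1 + length vs2 \<le> usp ?J"
    using length_le_usp[OF is_graph_bridge_union_usp[OF H1 H2 U1(1) U2(1)] bridge_union_usp[OF U1(1) U2(1)]]
    by simp
  moreover have "length vs1 \<le> card (verts H1)" "length vs2 \<le> card (verts H2)"
    using path_length_le_card H1 H2 U1(1) U2(1) by (auto simp: is_usp_def)
  ultimately show ?thesis using U1(2) U2(2) card_verts_bridge_union[OF H1 H2] by (simp add: sp_def)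
qed

section \<open>The upper bound\<close>

lemma sp_floor_union_le:
  assumes G: "is_graph G" and W1: "W1 \<subseteq> verts G" "W1 \<noteq> {}" and W2: "W2 \<subseteq> verts G" "W2 \<noteq> {}"
    and disj: "W1 \<inter> W2 = {}"
    and sep: "\<And>e. e \<in> edges G \<Longrightarrow> ends G e \<subseteq> W1 \<union> W2 \<Longrightarrow> ends G e \<subseteq> W1 \<or> ends G e \<subseteq> W2"
  shows "sp_floor (induced G (W1 \<union> W2)) \<le> sp_floor (induced G W1) + sp_floor (induced G W2)"
proof -
  obtain H1 where H1: "is_graph H1" "is_minor (induced G W1) H1" "sp H1 = sp_floor (induced G W1)"
    using sp_floor_attained[OF is_graph_induced[OF G W1]] .
  obtain H2 where H2: "is_graph H2" "is_minor (induced G W2) H2" "sp H2 = sp_floor (induced G W2)"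
    using sp_floor_attained[OF is_graph_induced[OF G W2]] .
  obtain \<phi>1 D1 \<psi>1 where M1: "minor_model (induced G W1) H1 \<phi>1 D1 \<psi>1"
    using is_minor_imp_minor_model[OF H1(2)] .
  obtain \<phi>2 D2 \<psi>2 where M2: "minor_model (induced G W2) H2 \<phi>2 D2 \<psi>2"
    using is_minor_imp_minor_model[OF H2(2)] .
  obtain vs1 es1 where U1: "is_usp H1 vs1 es1" "length vs1 = usp H1" using usp_attained[OF H1(1)] .
  obtain vs2 es2 where U2: "is_usp H2 vs2 es2" "length vs2 = usp H2" using usp_attained[OF H2(1)] .
  define J where "J = bridge_union H1 H2 (last vs1) (hd vs2)"
  have GJ: "is_graph J" unfolding J_def using H1(1) H2(1) U1(1) U2(1) by (rule is_graph_bridge_union_usp)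
  have GK: "is_graph (induced G (W1 \<union> W2))" using G W1 W2 by (intro is_graph_induced) auto
  have "minor_model (induced G (W1 \<union> W2)) J
      (interleave \<phi>1 \<phi>2) ((\<lambda>x. 2 * x) ` D1 \<union> (\<lambda>x. Suc (2 * x)) ` D2)
      (\<lambda>e. if ends G e \<subseteq> W1 then 3 * \<psi>1 e else Suc (3 * \<psi>2 e))"
    unfolding J_def using M1 M2 disj sep by (rule minor_model_bridge_union)
  then have "sp_floor (induced G (W1 \<union> W2)) \<le> sp J"
    using sp_floor_le[OF GJ] minor_model_imp_is_minor[OF GJ GK] by blast
  also have "\<dots> \<le> sp H1 + sp H2" unfolding J_def using H1(1) H2(1) U1 U2 by (rule sp_bridge_union_le)
  finally show ?thesis using H1(3) H2(3) by simp
qed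

lemma edge_within_component:
  assumes "is_graph G" "e \<in> edges G" "C \<in> components G" "x \<in> ends G e" "x \<in> C"
  shows "ends G e \<subseteq> C"
proof -
  obtain p q where pq: "ends G e = {p, q}" using assms(1,2) by (meson card_2_iff is_graph_def)
  then have "adj G p q" "adj G q p" using assms(2) by (auto simp: adj_def insert_commute)
  then show ?thesis using assms(4,5) pq component_adj_closed[OF assms(1,3)] by auto
qed

lemma sp_floor_Union_components_le:
  assumes G: "is_graph G"
  shows "finite CC \<Longrightarrow> CC \<noteq> {} \<Longrightarrow> CC \<subseteq> components G \<Longrightarrow>
    sp_floor (induced G (\<Union>CC)) \<le> (\<Sum>C\<in>CC. sp_floor (induced G C))"
proof (induction CC rule: finite_ne_induct)
  case (insert C CC)
  have C: "C \<in> components G" and CC: "CC \<subseteq> components G" using insert.prems by auto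
  have disj: "\<Union>CC \<inter> C = {}"
    using components_disjoint[OF C] CC insert.hyps(3) by blast
  have sep: "ends G e \<subseteq> \<Union>CC \<or> ends G e \<subseteq> C" if e: "e \<in> edges G" "ends G e \<subseteq> \<Union>CC \<union> C" for e
  proof -
    have "card (ends G e) = 2" using G e(1) by (simp add: is_graph_def)
    then obtain x where x: "x \<in> ends G e" by fastforce
    show ?thesis
    proof (cases "x \<in> C")
      case True
      then show ?thesis using edge_within_component[OF G e(1) C x] by blast
    next
      case False
      then obtain C' where "C' \<in> CC" "x \<in> C'" using x e(2) by blast
      then show ?thesis using edge_within_component[OF G e(1) _ x] CC by blast
    qed
  qed
  have "\<Union>CC \<subseteq> verts G" "\<Union>CC \<noteq> {}" "C \<subseteq> verts G" "C \<noteq> {}"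
    using CC C insert.hyps(2) component_subset component_nonempty by blast+
  then have "sp_floor (induced G (\<Union>CC \<union> C)) \<le> sp_floor (induced G (\<Union>CC)) + sp_floor (induced G C)"
    using sp_floor_union_le[OF G _ _ _ _ disj sep] by blast
  then show ?case using insert.IH[OF CC] insert.hyps(1,3) by (simp add: Un_commute)
qed simp

lemma sp_floor_le_sum_components:
  assumes G: "is_graph G"
  shows "sp_floor G \<le> (\<Sum>C\<in>components G. sp_floor (induced G C))"
proof -
  have "components G \<noteq> {}" using G Union_components[of G] by (auto simp: is_graph_def)
  then show ?thesis
    using sp_floor_Union_components_le[OF G finite_components[OF G]]
    by (simp add: Union_components induced_verts[OF G])
qed

theorem corollary3p2:
  assumes "is_graph G"
  shows "sp_floor G = (\<Sum>C\<in>components G. sp_floor (induced G C))"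
  using sp_floor_le_sum_components[OF assms] sum_sp_floor_components_le[OF assms] by simp

end
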